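(* Let $\delta>0$ and $\alpha\in(0,1)$ be fixed, and suppose the truncated kernel $\gamma_\alpha$ satisfies, for every $\boldsymbol{x}\in\Omega$, $$\int_\Omega \gamma_\alpha(\boldsymbol{x},\boldsymbol{y})\,d\boldsymbol{y}\le \frac{2}{\delta^2},\qquad \int_\Omega \gamma_\alpha(\boldsymbol{y},\boldsymbol{x})\,d\boldsymbol{y}\le K_1(\delta),\qquad \int_{\Omega_c}\frac{\gamma_\alpha(\boldsymbol{x},\boldsymbol{y})+\gamma_\alpha(\boldsymbol{y},\boldsymbol{x})}{2}\,d\boldsymbol{y}\ge K_2(\delta),$$ for some positive constants $K_1(\delta),K_2(\delta)$, and moreover $$\int_\Omega \frac{\gamma_\alpha(\boldsymbol{x},\boldsymbol{y})-\gamma_\alpha(\boldsymbol{y},\boldsymbol{x})}{2}\,d\boldsymbol{y}\ge 0\qquad\text{for all }\boldsymbol{x}\in\Omega.$$ Let $f\in L^2(\Omega)$. Then there exists a unique $u\in L^2_{n0}(\Omega)$ such that $\mathbf{B}(u,v)=\mathbf{F}(v)$ for all $v\in L^2_{n0}(\Omega)$ (the weak form of the nonlocal problem $-\mathcal{L}_{\delta,\alpha}u=f$ in $\Omega_s$, $u=0$ on $\Omega_c$), and this solution satisfies $$\|u\|_{L^2(\Omega)}\le \frac{2}{K_2(\delta)}\|f\|_{L^2(\Omega)}.$$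
   Context: Let $d\ge 1$ and let $\Omega_s\subset\mathbb{R}^d$ be a bounded Lipschitz domain. Let $\mathbf{A}(\boldsymbol{x})=(a^{i,j}(\boldsymbol{x}))_{i,j=1}^d$ be a symmetric matrix-valued function on $\mathbb{R}^d$ with Lipschitz continuous entries that is uniformly elliptic: $\lambda|\boldsymbol{\xi}|^2\le \boldsymbol{\xi}^T\mathbf{A}(\boldsymbol{x})\boldsymbol{\xi}\le\Lambda|\boldsymbol{\xi}|^2$ for all $\boldsymbol{\xi},\boldsymbol{x}\in\mathbb{R}^d$, with constants $0<\lambda\le\Lambda$. Fix $\delta>0$ and $\alpha\in(0,1)$, and let $\chi^2_\alpha(d)$ denote the $(1-\alpha)$-quantile of the chi-square distribution with $d$ degrees of freedom. Define the kernel $$\gamma(\boldsymbol{x},\boldsymbol{y})=\frac{2}{\delta^2}\,\frac{1}{\sqrt{(2\pi)^d\det(\delta^2\mathbf{A}(\boldsymbol{x}))}}\exp\Big(-\frac{(\boldsymbol{y}-\boldsymbol{x})^T\mathbf{A}(\boldsymbol{x})^{-1}(\boldsymbol{y}-\boldsymbol{x})}{2\delta^2}\Big),$$ the truncated influence region $B_{\delta,\mathbf{A},\alpha}(\boldsymbol{x})=\{\boldsymbol{y}\in\mathbb{R}^d:(\boldsymbol{y}-\boldsymbol{x})^T\mathbf{A}(\boldsymbol{x})^{-1}(\boldsymbol{y}-\boldsymbol{x})\le\delta^2\chi^2_\alpha(d)\}$, and the truncated kernel $\gamma_\alpha(\boldsymbol{x},\boldsymbol{y})=\gamma(\boldsymbol{x},\boldsymbol{y})$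 if $\boldsymbol{y}\in B_{\delta,\mathbf{A},\alpha}(\boldsymbol{x})$ and $\gamma_\alpha(\boldsymbol{x},\boldsymbol{y})=0$ otherwise. The interaction domain is $\Omega_c=\{\boldsymbol{y}\in\mathbb{R}^d\setminus\Omega_s:\exists\,\boldsymbol{x}\in\Omega_s,\ \boldsymbol{y}\in B_{\delta,\mathbf{A},\alpha}(\boldsymbol{x})\}$, and $\Omega=\Omega_s\cup\Omega_c$. The nonlocal operator is $\mathcal{L}_{\delta,\alpha}u(\boldsymbol{x})=\int_{\mathbb{R}^d}(u(\boldsymbol{y})-u(\boldsymbol{x}))\gamma_\alpha(\boldsymbol{x},\boldsymbol{y})\,d\boldsymbol{y}$. Let $L^2_{n0}(\Omega)=\{u\in L^2(\Omega): u=0 \text{ a.e. on }\Omega_c\}$, and define $$\mathbf{B}(u,v)=\int_\Omega\int_\Omega (u(\boldsymbol{x})-u(\boldsymbol{y}))v(\boldsymbol{x})\gamma_\alpha(\boldsymbol{x},\boldsymbol{y})\,d\boldsymbol{y}\,d\boldsymbol{x},\qquad \mathbf{F}(v)=\int_\Omega f(\boldsymbol{x})v(\boldsymbol{x})\,d\boldsymbol{x}.$$ *)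

theory Defs
  imports "HOL-Analysis.Analysis"
begin

definition chi2_density :: "nat \<Rightarrow> real \<Rightarrow> real" where
  "chi2_density k s =
     (if s > 0 then s powr (real k / 2 - 1) * exp (- s / 2) / (2 powr (real k / 2) * Gamma (real k / 2))
      else 0)"

definition chi2_cdf :: "nat \<Rightarrow> real \<Rightarrow> real" where
  "chi2_cdf k t = (\<integral>s\<in>{0..t}. chi2_density k s \<partial>lborel)"

definition chi2_quantile :: "nat \<Rightarrow> real \<Rightarrow> real" where
  "chi2_quantile k \<alpha> = (THE q. 0 < q \<and> chi2_cdf k q = 1 - \<alpha>)"

text \<open>Coordinate-free form of the usual definition: near every boundary point the set lies
  strictly below the graph of a Lipschitz function over the hyperplane orthogonal to some unit
  direction e.\<close>
definition lipschitz_domain :: "(real^'n) set \<Rightarrow> bool" where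
  "lipschitz_domain U \<longleftrightarrow> open U \<and> connected U \<and>
     (\<forall>p \<in> frontier U. \<exists>r>0. \<exists>e::real^'n. \<exists>g::real^'n \<Rightarrow> real. \<exists>L.
        norm e = 1 \<and> L-lipschitz_on UNIV g \<and>
        U \<inter> ball p r = {x \<in> ball p r. x \<bullet> e < g (x - (x \<bullet> e) *\<^sub>R e)})"

definition qform :: "(real^'n \<Rightarrow> real^'n^'n) \<Rightarrow> real^'n \<Rightarrow> real^'n \<Rightarrow> real" where
  "qform A x y = (y - x) \<bullet> (matrix_inv (A x) *v (y - x))"

definition gamma_kernel :: "(real^'n \<Rightarrow> real^'n^'n) \<Rightarrow> real \<Rightarrow> real^'n \<Rightarrow> real^'n \<Rightarrow> real" where
  "gamma_kernel A \<delta> x y =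
     2 / \<delta>\<^sup>2 * (1 / sqrt ((2 * pi) ^ CARD('n) * det ((\<delta>\<^sup>2) *\<^sub>R A x)))
       * exp (- qform A x y / (2 * \<delta>\<^sup>2))"

definition influence_region :: "(real^'n \<Rightarrow> real^'n^'n) \<Rightarrow> real \<Rightarrow> real \<Rightarrow> real^'n \<Rightarrow> (real^'n) set" where
  "influence_region A \<delta> \<alpha> x = {y. qform A x y \<le> \<delta>\<^sup>2 * chi2_quantile CARD('n) \<alpha>}"

definition gamma_trunc :: "(real^'n \<Rightarrow> real^'n^'n) \<Rightarrow> real \<Rightarrow> real \<Rightarrow> real^'n \<Rightarrow> real^'n \<Rightarrow> real" where
  "gamma_trunc A \<delta> \<alpha> x y = (if y \<in> influence_region A \<delta> \<alpha> x then gamma_kernel A \<delta> x y else 0)"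

definition interaction_domain :: "(real^'n \<Rightarrow> real^'n^'n) \<Rightarrow> real \<Rightarrow> real \<Rightarrow> (real^'n) set \<Rightarrow> (real^'n) set" where
  "interaction_domain A \<delta> \<alpha> S = {y. y \<notin> S \<and> (\<exists>x\<in>S. y \<in> influence_region A \<delta> \<alpha> x)}"

definition L2 :: "(real^'n) set \<Rightarrow> (real^'n \<Rightarrow> real) set" where
  "L2 U = {u. u \<in> borel_measurable (lebesgue_on U) \<and> integrable (lebesgue_on U) (\<lambda>x. (u x)\<^sup>2)}"

definition L2_norm :: "(real^'n) set \<Rightarrow> (real^'n \<Rightarrow> real) \<Rightarrow> real" where
  "L2_norm U u = sqrt (integral\<^sup>L (lebesgue_on U) (\<lambda>x. (u x)\<^sup>2))"

definition L2_n0 :: "(real^'n) set \<Rightarrow> (real^'n) set \<Rightarrow> (real^'n \<Rightarrow> real) set" where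
  "L2_n0 U C = {u \<in> L2 U. AE x in lebesgue_on U. x \<in> C \<longrightarrow> u x = 0}"

definition bform :: "(real^'n \<Rightarrow> real^'n \<Rightarrow> real) \<Rightarrow> (real^'n) set
                     \<Rightarrow> (real^'n \<Rightarrow> real) \<Rightarrow> (real^'n \<Rightarrow> real) \<Rightarrow> real" where
  "bform \<gamma> U u v = integral\<^sup>L (lebesgue_on U)
      (\<lambda>x. integral\<^sup>L (lebesgue_on U) (\<lambda>y. (u x - u y) * v x * \<gamma> x y))"

definition Ffun :: "(real^'n) set \<Rightarrow> (real^'n \<Rightarrow> real) \<Rightarrow> (real^'n \<Rightarrow> real) \<Rightarrow> real" where
  "Ffun U f v = integral\<^sup>L (lebesgue_on U) (\<lambda>x. f x * v x)"

end

theory Submission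
  imports Defs
begin

text \<open>Testing the weak form with functions supported in \<open>\<Omega>s\<close> shows that it is the pointwise
  equation \<open>a(x) u(x) - \<integral> u(y) \<gamma>(x,y) dy = f(x)\<close> on \<open>\<Omega>s\<close>, with \<open>a(x) = \<integral> \<gamma>(x,y) dy\<close> and \<open>u = 0\<close>
  on \<open>\<Omega>c\<close>. The first two kernel bounds make this operator \<open>S\<close> bounded on \<open>L\<^sup>2\<close> (Schur test). It
  is also coercive: \<open>2\<langle>u, S u\<rangle>\<close> is the Dirichlet energy \<open>\<integral>\<integral> (u x - u y)\<^sup>2 \<gamma>(x,y)\<close> plus
  \<open>\<integral> u\<^sup>2 (a - b)\<close> with \<open>b(x) = \<integral> \<gamma>(y,x) dy\<close>; the last integral is nonnegative by the fourth bound,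
  and since \<open>u\<close> vanishes on \<open>\<Omega>c\<close>, pairs with one point in \<open>\<Omega>c\<close> contribute at least
  \<open>2 K2 \<parallel>u\<parallel>\<^sup>2\<close> to the energy by the third bound. Lax--Milgram then applies; here it is carried out
  as a Picard iteration of the contraction \<open>u \<mapsto> u - \<omega> (S u - f)\<close> on \<open>\<Omega>s\<close>, whose increments
  decay geometrically in \<open>L\<^sup>2\<close> and hence sum to a solution. Coercivity also gives uniqueness and
  \<open>K2 \<parallel>u\<parallel>\<^sup>2 \<le> \<langle>u, f\<rangle> \<le> \<parallel>u\<parallel> \<parallel>f\<parallel>\<close>, i.e. the stability bound.\<close>

section \<open>Square-integrable functions\<close>

lemma abs_mult_le_sum_squares: "\<bar>(p::real) * q\<bar> \<le> p\<^sup>2 + q\<^sup>2"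
proof -
  have "2 * (\<bar>p\<bar> * \<bar>q\<bar>) \<le> \<bar>p\<bar>\<^sup>2 + \<bar>q\<bar>\<^sup>2"
    using sum_squares_ge_zero[of "\<bar>p\<bar> - \<bar>q\<bar>" 0] by (simp add: power2_eq_square algebra_simps)
  moreover have "0 \<le> \<bar>p\<bar> * \<bar>q\<bar>" "p\<^sup>2 = \<bar>p\<bar>\<^sup>2" "q\<^sup>2 = \<bar>q\<bar>\<^sup>2" by simp_all
  ultimately show ?thesis unfolding abs_mult by linarith
qed

lemma square_add_le: "((p::real) + q)\<^sup>2 \<le> 2 * p\<^sup>2 + 2 * q\<^sup>2"
  using sum_squares_ge_zero[of "p - q" 0] by (simp add: power2_eq_square algebra_simps)

lemma discriminant_le_of_nonneg:
  fixes a b c :: real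
  assumes nonneg: "\<And>t. 0 \<le> a + 2 * t * b + t\<^sup>2 * c" and "0 \<le> c"
  shows "b\<^sup>2 \<le> a * c"
proof (cases "c = 0")
  case True
  have "b = 0"
  proof (rule ccontr)
    assume "b \<noteq> 0"
    have "0 \<le> a + 2 * (- (a + 1) / (2 * b)) * b" using nonneg[of "- (a + 1) / (2 * b)"] True by simp
    also have "\<dots> = -1" using \<open>b \<noteq> 0\<close> by (simp add: field_simps)
    finally show False by simp
  qed
  then show ?thesis using True by simp
next
  case False
  with \<open>0 \<le> c\<close> have c: "0 < c" by simp
  have "0 \<le> a + 2 * (- b / c) * b + (- b / c)\<^sup>2 * c" by (rule nonneg)
  also have "\<dots> = a - b\<^sup>2 / c" using c by (simp add: field_simps power2_eq_square)
  finally show ?thesis using c by (simp add: field_simps)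
qed

definition square_integrable :: "'a measure \<Rightarrow> ('a \<Rightarrow> real) set" where
  "square_integrable M = {u. u \<in> borel_measurable M \<and> integrable M (\<lambda>x. (u x)\<^sup>2)}"

lemma square_integrableI:
  "u \<in> borel_measurable M \<Longrightarrow> integrable M (\<lambda>x. (u x)\<^sup>2) \<Longrightarrow> u \<in> square_integrable M"
  by (simp add: square_integrable_def)

lemma square_integrable_measurable[measurable_dest]:
  "u \<in> square_integrable M \<Longrightarrow> u \<in> borel_measurable M"
  by (simp add: square_integrable_def)

lemma square_integrable_integrable:
  "u \<in> square_integrable M \<Longrightarrow> integrable M (\<lambda>x. (u x)\<^sup>2)"
  by (simp add: square_integrable_def)

lemma square_integrable_bounded:
  assumes "w \<in> borel_measurable M" "integrable M g" "\<And>x. (w x)\<^sup>2 \<le> g x"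
  shows "w \<in> square_integrable M"
proof (rule square_integrableI[OF assms(1)])
  show "integrable M (\<lambda>x. (w x)\<^sup>2)"
  proof (rule Bochner_Integration.integrable_bound[OF assms(2)])
    show "AE x in M. norm ((w x)\<^sup>2) \<le> norm (g x)"
      using assms(3) by (intro AE_I2) (auto simp: order.trans[OF _ abs_ge_self])
  qed (use assms(1) in measurable)
qed

lemma square_integrable_add:
  assumes u: "u \<in> square_integrable M" and v: "v \<in> square_integrable M"
  shows "(\<lambda>x. u x + v x) \<in> square_integrable M"
  using u v square_add_le
  by (intro square_integrable_bounded[of _ _ "\<lambda>x. 2 * (u x)\<^sup>2 + 2 * (v x)\<^sup>2"])
     (auto simp: square_integrable_integrable)

lemma square_integrable_cmult:
  "u \<in> square_integrable M \<Longrightarrow> (\<lambda>x. c * u x) \<in> square_integrable M"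
  by (rule square_integrable_bounded[of _ _ "\<lambda>x. c\<^sup>2 * (u x)\<^sup>2"])
     (auto simp: power_mult_distrib square_integrable_integrable)

lemma square_integrable_diff:
  "u \<in> square_integrable M \<Longrightarrow> v \<in> square_integrable M \<Longrightarrow> (\<lambda>x. u x - v x) \<in> square_integrable M"
  using square_integrable_add[of u M "\<lambda>x. -1 * v x"] square_integrable_cmult[of v M "-1"] by simp

lemma square_integrable_mult_indicator:
  "S \<in> sets M \<Longrightarrow> u \<in> square_integrable M \<Longrightarrow> (\<lambda>x. indicator S x * u x) \<in> square_integrable M"
  by (rule square_integrable_bounded[of _ _ "\<lambda>x. (u x)\<^sup>2"])
     (auto simp: indicator_def square_integrable_integrable)

lemma integrable_mult_square_integrable:
  assumes "p \<in> square_integrable M" "q \<in> square_integrable M"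
  shows "integrable M (\<lambda>x. p x * q x)"
proof (rule Bochner_Integration.integrable_bound[of _ "\<lambda>x. (p x)\<^sup>2 + (q x)\<^sup>2"])
  show "integrable M (\<lambda>x. (p x)\<^sup>2 + (q x)\<^sup>2)"
    using assms by (simp add: square_integrable_integrable)
qed (use assms in \<open>auto simp: abs_mult_le_sum_squares\<close>)

lemma Cauchy_Schwarz_integral:
  assumes p: "p \<in> square_integrable M" and q: "q \<in> square_integrable M"
  shows "(\<integral>x. p x * q x \<partial>M)\<^sup>2 \<le> (\<integral>x. (p x)\<^sup>2 \<partial>M) * (\<integral>x. (q x)\<^sup>2 \<partial>M)"
proof (rule discriminant_le_of_nonneg)
  fix t :: real
  have "0 \<le> (\<integral>x. (p x + t * q x)\<^sup>2 \<partial>M)" by (rule integral_nonneg_AE) simp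
  also have "(\<integral>x. (p x + t * q x)\<^sup>2 \<partial>M) = (\<integral>x. (p x)\<^sup>2 + 2 * t * (p x * q x) + t\<^sup>2 * (q x)\<^sup>2 \<partial>M)"
    by (rule Bochner_Integration.integral_cong) (auto simp: power2_eq_square algebra_simps)
  also have "\<dots> = (\<integral>x. (p x)\<^sup>2 \<partial>M) + 2 * t * (\<integral>x. p x * q x \<partial>M) + t\<^sup>2 * (\<integral>x. (q x)\<^sup>2 \<partial>M)"
    using p q by (simp add: square_integrable_integrable integrable_mult_square_integrable)
  finally show "0 \<le> (\<integral>x. (p x)\<^sup>2 \<partial>M) + 2 * t * (\<integral>x. p x * q x \<partial>M) + t\<^sup>2 * (\<integral>x. (q x)\<^sup>2 \<partial>M)" .
qed (simp add: integral_nonneg_AE)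

lemma square_integral_eq_0_iff:
  "u \<in> square_integrable M \<Longrightarrow> (\<integral>x. (u x)\<^sup>2 \<partial>M) = 0 \<longleftrightarrow> (AE x in M. u x = 0)"
  by (subst integral_nonneg_eq_0_iff_AE) (auto simp: square_integrable_integrable)

lemma summable_tail_bound_weighted:
  fixes c :: "nat \<Rightarrow> real"
  assumes \<rho>: "0 < \<rho>" "\<rho> < 1" and sm: "summable (\<lambda>j. (c j)\<^sup>2 / \<rho> ^ j)"
  shows "summable c"
    and "(suminf c - (\<Sum>j<k. c j))\<^sup>2 \<le> (\<Sum>j. (c j)\<^sup>2 / \<rho> ^ j) * \<rho> ^ k / (1 - sqrt \<rho>)\<^sup>2"
proof -
  define w where "w = (\<Sum>j. (c j)\<^sup>2 / \<rho> ^ j)"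
  define r where "r = sqrt \<rho>"
  have r: "0 \<le> r" "r < 1" "r\<^sup>2 = \<rho>" using \<rho> by (auto simp: r_def)
  have w: "0 \<le> w" unfolding w_def using \<rho> by (intro suminf_nonneg sm) auto
  have c_le: "\<bar>c j\<bar> \<le> sqrt w * r ^ j" for j
  proof -
    have "(c j)\<^sup>2 / \<rho> ^ j \<le> w"
      using sum_le_suminf[OF sm, of "{j}"] \<rho> unfolding w_def by simp
    then have "(c j)\<^sup>2 \<le> w * \<rho> ^ j" using \<rho> by (simp add: divide_le_eq)
    then have "sqrt ((c j)\<^sup>2) \<le> sqrt (w * \<rho> ^ j)" by (rule real_sqrt_le_mono)
    then have "\<bar>c j\<bar> \<le> sqrt w * sqrt (\<rho> ^ j)" by (simp only: real_sqrt_abs real_sqrt_mult)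
    then show ?thesis by (simp add: r_def real_sqrt_power)
  qed
  have geom: "summable (\<lambda>j. a * r ^ j)" for a
    using r by (intro summable_mult summable_geometric) simp
  show smc: "summable c"
    by (rule summable_comparison_test[OF _ geom[of "sqrt w"]]) (use c_le in auto)
  have "suminf c - (\<Sum>j<k. c j) = (\<Sum>j. c (j + k))"
    using suminf_split_initial_segment[OF smc, of k] by simp
  also have "\<bar>\<dots>\<bar> \<le> (\<Sum>j. (sqrt w * r ^ k) * r ^ j)"
    unfolding real_norm_def[symmetric]
  proof (rule norm_suminf_le[OF _ geom])
    show "norm (c (j + k)) \<le> sqrt w * r ^ k * r ^ j" for j
      using c_le[of "j + k"] by (simp add: power_add mult_ac)
  qed
  also have "\<dots> = sqrt w * r ^ k / (1 - r)"
    using r by (simp add: suminf_mult suminf_geometric)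
  finally have "\<bar>suminf c - (\<Sum>j<k. c j)\<bar>\<^sup>2 \<le> (sqrt w * r ^ k / (1 - r))\<^sup>2"
    by (rule power_mono) simp
  then have "(suminf c - (\<Sum>j<k. c j))\<^sup>2 \<le> (sqrt w * r ^ k / (1 - r))\<^sup>2" by simp
  also have "\<dots> = w * \<rho> ^ k / (1 - r)\<^sup>2"
  proof -
    have "(r ^ k)\<^sup>2 = \<rho> ^ k" using r(3) by (metis power_mult mult.commute)
    then show ?thesis using w by (simp add: power_divide power_mult_distrib)
  qed
  finally show "(suminf c - (\<Sum>j<k. c j))\<^sup>2 \<le> (\<Sum>j. (c j)\<^sup>2 / \<rho> ^ j) * \<rho> ^ k / (1 - sqrt \<rho>)\<^sup>2"
    by (simp add: w_def r_def)
qed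

lemma nn_integral_weighted_squares_finite:
  assumes d: "\<And>j. d j \<in> square_integrable M"
    and decay: "\<And>j. (\<integral>x. (d j x)\<^sup>2 \<partial>M) \<le> C * q ^ j" and q: "0 \<le> q" "q < \<rho>"
  shows "(\<integral>\<^sup>+x. (\<Sum>j. ennreal ((d j x)\<^sup>2 / \<rho> ^ j)) \<partial>M) < \<infinity>"
proof -
  have \<rho>: "0 < \<rho>" using q by simp
  have "0 \<le> (\<integral>x. (d 0 x)\<^sup>2 \<partial>M)" by (rule integral_nonneg_AE) simp
  moreover have "(\<integral>x. (d 0 x)\<^sup>2 \<partial>M) \<le> C" using decay[of 0] by simp
  ultimately have C: "0 \<le> C" by linarith
  have term_le: "(\<integral>\<^sup>+x. ennreal ((d j x)\<^sup>2 / \<rho> ^ j) \<partial>M) \<le> ennreal (C * (q / \<rho>) ^ j)" for j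
  proof -
    have "(\<integral>\<^sup>+x. ennreal ((d j x)\<^sup>2 / \<rho> ^ j) \<partial>M) = ennreal ((\<integral>x. (d j x)\<^sup>2 \<partial>M) / \<rho> ^ j)"
      using d[of j] \<rho> by (subst nn_integral_eq_integral) (auto simp: square_integrable_integrable)
    also have "\<dots> \<le> ennreal (C * (q / \<rho>) ^ j)"
      using decay[of j] \<rho> by (intro ennreal_leI) (simp add: divide_le_eq power_divide)
    finally show ?thesis .
  qed
  have [measurable]: "d j \<in> borel_measurable M" for j using d by measurable
  have "(\<integral>\<^sup>+x. (\<Sum>j. ennreal ((d j x)\<^sup>2 / \<rho> ^ j)) \<partial>M) = (\<Sum>j. \<integral>\<^sup>+x. ennreal ((d j x)\<^sup>2 / \<rho> ^ j) \<partial>M)"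
    by (rule nn_integral_suminf) measurable
  also have "\<dots> \<le> (\<Sum>j. ennreal (C * (q / \<rho>) ^ j))"
    by (intro suminf_le[OF term_le summableI summableI])
  also have "\<dots> = ennreal (\<Sum>j. C * (q / \<rho>) ^ j)"
    using q C by (intro suminf_ennreal2 summable_mult summable_geometric) auto
  finally show ?thesis by (rule le_less_trans) simp
qed

lemma integrable_enn2real:
  assumes [measurable]: "W \<in> borel_measurable M" and fin: "(\<integral>\<^sup>+x. W x \<partial>M) < \<infinity>"
  shows "integrable M (\<lambda>x. enn2real (W x))"
proof (rule integrableI_bounded)
  have "(\<integral>\<^sup>+x. ennreal (norm (enn2real (W x))) \<partial>M) \<le> (\<integral>\<^sup>+x. W x \<partial>M)"
    by (rule nn_integral_mono) (simp add: ennreal_enn2real_if)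
  then show "(\<integral>\<^sup>+x. ennreal (norm (enn2real (W x))) \<partial>M) < \<infinity>" using fin by simp
qed measurable

lemma suminf_tail_bound_ennreal_weighted:
  fixes c :: "nat \<Rightarrow> real"
  assumes \<rho>: "0 < \<rho>" "\<rho> < 1" and fin: "(\<Sum>j. ennreal ((c j)\<^sup>2 / \<rho> ^ j)) \<noteq> top"
  shows "(suminf c - (\<Sum>j<k. c j))\<^sup>2 \<le> enn2real (\<Sum>j. ennreal ((c j)\<^sup>2 / \<rho> ^ j)) * \<rho> ^ k / (1 - sqrt \<rho>)\<^sup>2"
proof -
  have nn: "0 \<le> (c j)\<^sup>2 / \<rho> ^ j" for j using \<rho> by simp
  have sm: "summable (\<lambda>j. (c j)\<^sup>2 / \<rho> ^ j)" by (rule summable_suminf_not_top[OF nn fin])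
  have "enn2real (\<Sum>j. ennreal ((c j)\<^sup>2 / \<rho> ^ j)) = (\<Sum>j. (c j)\<^sup>2 / \<rho> ^ j)"
    using suminf_ennreal2[OF nn sm] suminf_nonneg[OF sm nn] by simp
  then show ?thesis using summable_tail_bound_weighted(2)[OF \<rho> sm] by simp
qed

text \<open>Weighting the squares of the terms by \<open>\<rho>\<^sup>-\<^sup>j\<close> with \<open>q < \<rho> < 1\<close> keeps their sum integrable;
  wherever this sum is finite, the terms are dominated by a geometric sequence.\<close>

lemma square_integrable_series:
  assumes d: "\<And>j. d j \<in> square_integrable M"
    and decay: "\<And>j. (\<integral>x. (d j x)\<^sup>2 \<partial>M) \<le> C * q ^ j" and q: "0 \<le> q" "q < 1"
  obtains u where "u \<in> square_integrable M" "\<And>x. (\<And>j. d j x = 0) \<Longrightarrow> u x = 0"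
    and "(\<lambda>k. \<integral>x. (u x - (\<Sum>j<k. d j x))\<^sup>2 \<partial>M) \<longlonglongrightarrow> 0"
proof -
  define \<rho> where "\<rho> = (1 + q) / 2"
  have \<rho>: "0 < \<rho>" "\<rho> < 1" "q < \<rho>" using q by (auto simp: \<rho>_def)
  define W where "W x = (\<Sum>j. ennreal ((d j x)\<^sup>2 / \<rho> ^ j))" for x
  define c where "c = 1 / (1 - sqrt \<rho>)\<^sup>2"
  define u where "u x = (if W x \<noteq> top then \<Sum>j. d j x else 0)" for x
  have [measurable]: "d j \<in> borel_measurable M" for j using d by measurable
  have [measurable]: "W \<in> borel_measurable M" "u \<in> borel_measurable M"
    unfolding W_def u_def by measurable
  have W_fin: "(\<integral>\<^sup>+x. W x \<partial>M) < \<infinity>"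
    unfolding W_def by (rule nn_integral_weighted_squares_finite[OF d decay q(1) \<rho>(3)])
  have int_W: "integrable M (\<lambda>x. enn2real (W x))" by (rule integrable_enn2real[OF _ W_fin]) simp
  have tail: "(u x - (\<Sum>j<k. d j x))\<^sup>2 \<le> c * enn2real (W x) * \<rho> ^ k" if "W x \<noteq> top" for x k
    using suminf_tail_bound_ennreal_weighted[OF \<rho>(1,2) that[unfolded W_def], of k] that
    by (simp add: u_def c_def W_def)
  have AE_W: "AE x in M. W x \<noteq> top"
    using nn_integral_PInf_AE[of W M] W_fin by simp
  have int_tail: "integrable M (\<lambda>x. (u x - (\<Sum>j<k. d j x))\<^sup>2)"
   and le_tail: "(\<integral>x. (u x - (\<Sum>j<k. d j x))\<^sup>2 \<partial>M) \<le> c * (\<integral>x. enn2real (W x) \<partial>M) * \<rho> ^ k" for k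
  proof -
    have bound: "AE x in M. (u x - (\<Sum>j<k. d j x))\<^sup>2 \<le> c * enn2real (W x) * \<rho> ^ k"
      using AE_W by eventually_elim (rule tail)
    have int_bound: "integrable M (\<lambda>x. c * enn2real (W x) * \<rho> ^ k)" using int_W by simp
    have "AE x in M. norm ((u x - (\<Sum>j<k. d j x))\<^sup>2) \<le> norm (c * enn2real (W x) * \<rho> ^ k)"
      using bound by eventually_elim (use \<rho> in \<open>simp add: c_def abs_mult\<close>)
    then show int: "integrable M (\<lambda>x. (u x - (\<Sum>j<k. d j x))\<^sup>2)"
      by (rule Bochner_Integration.integrable_bound[OF int_bound, rotated]) measurable
    have "(\<integral>x. (u x - (\<Sum>j<k. d j x))\<^sup>2 \<partial>M) \<le> (\<integral>x. c * enn2real (W x) * \<rho> ^ k \<partial>M)"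
      by (rule integral_mono_AE[OF int int_bound bound])
    then show "(\<integral>x. (u x - (\<Sum>j<k. d j x))\<^sup>2 \<partial>M) \<le> c * (\<integral>x. enn2real (W x) \<partial>M) * \<rho> ^ k"
      by simp
  qed
  show ?thesis
  proof
    show "u \<in> square_integrable M" using int_tail[of 0] by (simp add: square_integrableI)
    show "u x = 0" if "\<And>j. d j x = 0" for x using that by (simp add: u_def)
    have "(\<lambda>k. c * (\<integral>x. enn2real (W x) \<partial>M) * \<rho> ^ k) \<longlonglongrightarrow> c * (\<integral>x. enn2real (W x) \<partial>M) * 0"
      using \<rho> by (intro tendsto_mult_left LIMSEQ_power_zero) auto
    then have lim: "(\<lambda>k. c * (\<integral>x. enn2real (W x) \<partial>M) * \<rho> ^ k) \<longlonglongrightarrow> 0" by simp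
    show "(\<lambda>k. \<integral>x. (u x - (\<Sum>j<k. d j x))\<^sup>2 \<partial>M) \<longlonglongrightarrow> 0"
    proof (rule tendsto_sandwich[OF _ _ tendsto_const lim])
      show "\<forall>\<^sub>F k in sequentially. 0 \<le> (\<integral>x. (u x - (\<Sum>j<k. d j x))\<^sup>2 \<partial>M)"
        by (intro always_eventually allI integral_nonneg_AE) simp
      show "\<forall>\<^sub>F k in sequentially. (\<integral>x. (u x - (\<Sum>j<k. d j x))\<^sup>2 \<partial>M)
          \<le> c * (\<integral>x. enn2real (W x) \<partial>M) * \<rho> ^ k"
        by (intro always_eventually allI le_tail)
    qed
  qed
qed

section \<open>The abstract nonlocal problem\<close>

lemma (in pair_sigma_finite) integrable_square_times_kernel:
  assumes u: "u \<in> square_integrable M1"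
    and H[measurable]: "(\<lambda>p. H (fst p) (snd p)) \<in> borel_measurable (M1 \<Otimes>\<^sub>M M2)"
    and H_nonneg: "\<And>x y. 0 \<le> H x y" and H_int: "\<And>x. integrable M2 (H x)"
    and H_bound: "\<And>x. (\<integral>y. H x y \<partial>M2) \<le> B"
  shows "integrable (M1 \<Otimes>\<^sub>M M2) (\<lambda>(x, y). (u x)\<^sup>2 * H x y)"
proof (rule Fubini_integrable)
  have [measurable]: "u \<in> borel_measurable M1" using u by (rule square_integrable_measurable)
  show "(\<lambda>(x, y). (u x)\<^sup>2 * H x y) \<in> borel_measurable (M1 \<Otimes>\<^sub>M M2)" by measurable
  show "AE x in M1. integrable M2 (\<lambda>y. case (x, y) of (x, y) \<Rightarrow> (u x)\<^sup>2 * H x y)"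
    using H_int by simp
  have "(\<lambda>x. \<integral>y. norm (case (x, y) of (x, y) \<Rightarrow> (u x)\<^sup>2 * H x y) \<partial>M2) = (\<lambda>x. (u x)\<^sup>2 * (\<integral>y. H x y \<partial>M2))"
    by (simp add: H_nonneg abs_mult)
  moreover have "integrable M1 (\<lambda>x. (u x)\<^sup>2 * (\<integral>y. H x y \<partial>M2))"
  proof (rule Bochner_Integration.integrable_bound[of _ "\<lambda>x. B * (u x)\<^sup>2"])
    show "integrable M1 (\<lambda>x. B * (u x)\<^sup>2)" using square_integrable_integrable[OF u] by simp
    have [measurable]: "(\<lambda>x. \<integral>y. H x y \<partial>M2) \<in> borel_measurable M1"
      by (rule M2.borel_measurable_lebesgue_integral) measurable
    show "(\<lambda>x. (u x)\<^sup>2 * (\<integral>y. H x y \<partial>M2)) \<in> borel_measurable M1" by measurable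
    have "\<bar>\<integral>y. H x y \<partial>M2\<bar> \<le> \<bar>B\<bar>" for x
      using H_bound[of x] integral_nonneg_AE[of "H x" M2] H_nonneg by simp
    then have "\<bar>\<integral>y. H x y \<partial>M2\<bar> * (u x)\<^sup>2 \<le> \<bar>B\<bar> * (u x)\<^sup>2" for x
      by (intro mult_right_mono) auto
    then show "AE x in M1. norm ((u x)\<^sup>2 * (\<integral>y. H x y \<partial>M2)) \<le> norm (B * (u x)\<^sup>2)"
      by (intro AE_I2) (simp add: abs_mult mult.commute)
  qed
  ultimately show "integrable M1 (\<lambda>x. \<integral>y. norm (case (x, y) of (x, y) \<Rightarrow> (u x)\<^sup>2 * H x y) \<partial>M2)"
    by simp
qed

text \<open>\<open>G\<close> is the kernel, \<open>A1\<close> and \<open>K1\<close> bound its row and column integrals, and \<open>nonlocal_op u\<close>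
  is the negated nonlocal operator \<open>-L u\<close>; \<open>trial_space\<close> plays the role of \<open>L\<^sup>2\<^sub>n\<^sub>0\<close>, with
  pointwise rather than a.e. vanishing.\<close>

locale nonlocal_problem = sigma_finite_measure M
  for M :: "'a measure" +
  fixes \<Omega>s \<Omega>c :: "'a set" and G :: "'a \<Rightarrow> 'a \<Rightarrow> real" and A1 K1 K2 :: real
  assumes sets_\<Omega>s[measurable]: "\<Omega>s \<in> sets M" and sets_\<Omega>c[measurable]: "\<Omega>c \<in> sets M"
    and disjoint: "\<Omega>s \<inter> \<Omega>c = {}"
    and G_measurable[measurable]: "(\<lambda>p. G (fst p) (snd p)) \<in> borel_measurable (M \<Otimes>\<^sub>M M)"
    and G_nonneg: "\<And>x y. 0 \<le> G x y"
    and integrable_row: "\<And>x. integrable M (\<lambda>y. G x y)"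
    and integrable_column: "\<And>x. integrable M (\<lambda>y. G y x)"
    and row_bound: "\<And>x. (\<integral>y. G x y \<partial>M) \<le> A1"
    and column_bound: "\<And>x. (\<integral>y. G y x \<partial>M) \<le> K1"
    and interaction_bound: "\<And>x. x \<in> \<Omega>s \<Longrightarrow> 2 * K2 \<le> (\<integral>y. indicator \<Omega>c y * (G x y + G y x) \<partial>M)"
    and column_le_row: "\<And>x. x \<in> \<Omega>s \<Longrightarrow> (\<integral>y. G y x \<partial>M) \<le> (\<integral>y. G x y \<partial>M)"
    and K2_pos: "0 < K2" and A1_pos: "0 < A1"
begin

sublocale P: pair_sigma_finite M M ..

lemma G_swap_measurable[measurable]: "(\<lambda>p. G (snd p) (fst p)) \<in> borel_measurable (M \<Otimes>\<^sub>M M)"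
  using measurable_compose[OF measurable_pair_swap' G_measurable] by (simp add: case_prod_unfold)

lemma G_measurable_row[measurable]: "(\<lambda>y. G x y) \<in> borel_measurable M"
  and G_measurable_column[measurable]: "(\<lambda>y. G y x) \<in> borel_measurable M"
  using integrable_row[of x] integrable_column[of x] by auto

definition row_mass :: "'a \<Rightarrow> real" where "row_mass x = (\<integral>y. G x y \<partial>M)"
definition column_mass :: "'a \<Rightarrow> real" where "column_mass x = (\<integral>y. G y x \<partial>M)"
definition kernel_op :: "('a \<Rightarrow> real) \<Rightarrow> 'a \<Rightarrow> real" where
  "kernel_op u x = (\<integral>y. u y * G x y \<partial>M)"
definition nonlocal_op :: "('a \<Rightarrow> real) \<Rightarrow> 'a \<Rightarrow> real" where
  "nonlocal_op u x = row_mass x * u x - kernel_op u x"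
definition trial_space :: "('a \<Rightarrow> real) set" where
  "trial_space = {u \<in> square_integrable M. \<forall>x. x \<notin> \<Omega>s \<longrightarrow> u x = 0}"
definition op_bound :: real where "op_bound = 2 * A1\<^sup>2 + 2 * A1 * K1"

lemma row_mass_measurable[measurable]: "row_mass \<in> borel_measurable M"
  and column_mass_measurable[measurable]: "column_mass \<in> borel_measurable M"
  unfolding row_mass_def column_mass_def by (rule borel_measurable_lebesgue_integral, measurable)+

lemma kernel_op_measurable[measurable]:
  assumes [measurable]: "u \<in> borel_measurable M"
  shows "kernel_op u \<in> borel_measurable M"
  unfolding kernel_op_def by (rule borel_measurable_lebesgue_integral) measurable

lemma nonlocal_op_measurable[measurable]:
  assumes [measurable]: "u \<in> borel_measurable M"
  shows "nonlocal_op u \<in> borel_measurable M"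
  unfolding nonlocal_op_def by measurable

lemma row_mass_nonneg: "0 \<le> row_mass x" and column_mass_nonneg: "0 \<le> column_mass x"
  unfolding row_mass_def column_mass_def by (simp_all add: integral_nonneg_AE G_nonneg)

lemma K1_nonneg: "0 \<le> K1"
  using column_mass_nonneg[of undefined] column_bound[of undefined] by (simp add: column_mass_def)

lemma op_bound_pos: "0 < op_bound"
  unfolding op_bound_def using A1_pos K1_nonneg by (simp add: add_pos_nonneg)

lemma trial_spaceI: "u \<in> square_integrable M \<Longrightarrow> (\<And>x. x \<notin> \<Omega>s \<Longrightarrow> u x = 0) \<Longrightarrow> u \<in> trial_space"
  and trial_space_square_integrable: "v \<in> trial_space \<Longrightarrow> v \<in> square_integrable M"
  and trial_space_vanishes: "v \<in> trial_space \<Longrightarrow> x \<notin> \<Omega>s \<Longrightarrow> v x = 0"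
  by (auto simp: trial_space_def)

lemma trial_space_diff: "u \<in> trial_space \<Longrightarrow> v \<in> trial_space \<Longrightarrow> (\<lambda>x. u x - v x) \<in> trial_space"
  by (auto simp: trial_space_def square_integrable_diff)

lemma trial_space_restrict: "u \<in> square_integrable M \<Longrightarrow> (\<lambda>x. indicator \<Omega>s x * u x) \<in> trial_space"
  by (auto simp: trial_space_def square_integrable_mult_indicator)

lemma integrable_square_times_G:
  assumes "u \<in> square_integrable M"
  shows "integrable (M \<Otimes>\<^sub>M M) (\<lambda>(x, y). (u x)\<^sup>2 * G x y)"
    and "integrable (M \<Otimes>\<^sub>M M) (\<lambda>(x, y). (u y)\<^sup>2 * G x y)"
proof -
  show "integrable (M \<Otimes>\<^sub>M M) (\<lambda>(x, y). (u x)\<^sup>2 * G x y)"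
    by (rule P.integrable_square_times_kernel[OF assms G_measurable G_nonneg integrable_row row_bound])
  have "integrable (M \<Otimes>\<^sub>M M) (\<lambda>(y, x). (u y)\<^sup>2 * G x y)"
    by (rule P.integrable_square_times_kernel[OF assms G_swap_measurable G_nonneg integrable_column column_bound])
  from P.integrable_product_swap[OF this]
  show "integrable (M \<Otimes>\<^sub>M M) (\<lambda>(x, y). (u y)\<^sup>2 * G x y)" by simp
qed

lemma kernel_op_Cauchy_Schwarz:
  assumes [measurable]: "u \<in> borel_measurable M" and int: "integrable M (\<lambda>y. (u y)\<^sup>2 * G x y)"
  shows "integrable M (\<lambda>y. u y * G x y)"
    and "(kernel_op u x)\<^sup>2 \<le> row_mass x * (\<integral>y. (u y)\<^sup>2 * G x y \<partial>M)"
proof -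
  define p where "p y = u y * sqrt (G x y)" for y
  define q where "q y = sqrt (G x y)" for y
  have [measurable]: "p \<in> borel_measurable M" "q \<in> borel_measurable M" unfolding p_def q_def by measurable
  have pq: "p y * q y = u y * G x y" for y by (simp add: p_def q_def G_nonneg mult.assoc)
  have p: "p \<in> square_integrable M"
    using int by (intro square_integrableI) (simp_all add: p_def power_mult_distrib G_nonneg)
  have q: "q \<in> square_integrable M"
    using integrable_row[of x] by (intro square_integrableI) (simp_all add: q_def G_nonneg)
  show "integrable M (\<lambda>y. u y * G x y)"
    using integrable_mult_square_integrable[OF p q] by (simp add: pq)
  have "(\<integral>y. p y * q y \<partial>M) = kernel_op u x" by (simp add: pq kernel_op_def)
  moreover have "(\<integral>y. (p y)\<^sup>2 \<partial>M) = (\<integral>y. (u y)\<^sup>2 * G x y \<partial>M)"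
    by (simp add: p_def power_mult_distrib G_nonneg)
  moreover have "(\<integral>y. (q y)\<^sup>2 \<partial>M) = row_mass x" by (simp add: q_def G_nonneg row_mass_def)
  ultimately show "(kernel_op u x)\<^sup>2 \<le> row_mass x * (\<integral>y. (u y)\<^sup>2 * G x y \<partial>M)"
    using Cauchy_Schwarz_integral[OF p q] by (simp add: mult.commute)
qed

lemma AE_integrable_kernel_op:
  assumes u: "u \<in> square_integrable M"
  shows "AE x in M. integrable M (\<lambda>y. u y * G x y)"
  using P.AE_integrable_fst[OF integrable_square_times_G(2)[OF u]]
  by eventually_elim (rule kernel_op_Cauchy_Schwarz(1)[OF square_integrable_measurable[OF u]])

text \<open>Schur test: integrate the pointwise Cauchy--Schwarz bound and use Fubini.\<close>

lemma kernel_op_square_integrable: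
  assumes u: "u \<in> square_integrable M"
  shows "kernel_op u \<in> square_integrable M" "(\<integral>x. (kernel_op u x)\<^sup>2 \<partial>M) \<le> A1 * K1 * (\<integral>x. (u x)\<^sup>2 \<partial>M)"
proof -
  define B where "B x = (\<integral>y. (u y)\<^sup>2 * G x y \<partial>M)" for x
  have iy: "integrable (M \<Otimes>\<^sub>M M) (\<lambda>(x, y). (u y)\<^sup>2 * G x y)" by (rule integrable_square_times_G(2)[OF u])
  have int_B: "integrable M B" unfolding B_def by (rule P.integrable_fst[OF iy])
  have B_nonneg: "0 \<le> B x" for x unfolding B_def by (simp add: integral_nonneg_AE G_nonneg)
  have "(\<integral>x. B x \<partial>M) = (\<integral>y. (\<integral>x. (u y)\<^sup>2 * G x y \<partial>M) \<partial>M)"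
    unfolding B_def by (rule P.Fubini_integral[OF iy, symmetric])
  also have "\<dots> = (\<integral>y. (u y)\<^sup>2 * column_mass y \<partial>M)" by (simp add: column_mass_def)
  also have "\<dots> \<le> (\<integral>y. K1 * (u y)\<^sup>2 \<partial>M)"
  proof (rule integral_mono)
    show "integrable M (\<lambda>y. K1 * (u y)\<^sup>2)" using square_integrable_integrable[OF u] by simp
    show "integrable M (\<lambda>y. (u y)\<^sup>2 * column_mass y)"
      using P.integrable_snd[OF iy] by (simp add: column_mass_def)
    show "(u y)\<^sup>2 * column_mass y \<le> K1 * (u y)\<^sup>2" for y
      using mult_right_mono[OF column_bound[of y], of "(u y)\<^sup>2"] by (simp add: column_mass_def mult.commute)
  qed
  finally have int_B_le: "(\<integral>x. B x \<partial>M) \<le> K1 * (\<integral>y. (u y)\<^sup>2 \<partial>M)" by simp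
  have pointwise: "AE x in M. (kernel_op u x)\<^sup>2 \<le> A1 * B x"
    using P.AE_integrable_fst[OF iy]
  proof eventually_elim
    case (elim x)
    have "(kernel_op u x)\<^sup>2 \<le> row_mass x * B x"
      unfolding B_def by (rule kernel_op_Cauchy_Schwarz(2)[OF square_integrable_measurable[OF u] elim])
    also have "\<dots> \<le> A1 * B x"
      by (rule mult_right_mono[OF _ B_nonneg]) (simp add: row_mass_def row_bound)
    finally show ?case .
  qed
  have int_A1B: "integrable M (\<lambda>x. A1 * B x)" using int_B by simp
  have "AE x in M. norm ((kernel_op u x)\<^sup>2) \<le> norm (A1 * B x)"
    using pointwise by eventually_elim (use A1_pos B_nonneg in simp)
  then have int_K: "integrable M (\<lambda>x. (kernel_op u x)\<^sup>2)"
    by (rule Bochner_Integration.integrable_bound[OF int_A1B, rotated]) (use u in measurable)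
  then show "kernel_op u \<in> square_integrable M"
    using square_integrable_measurable[OF u] by (intro square_integrableI) auto
  have "(\<integral>x. (kernel_op u x)\<^sup>2 \<partial>M) \<le> (\<integral>x. A1 * B x \<partial>M)"
    by (rule integral_mono_AE[OF int_K int_A1B pointwise])
  also have "\<dots> \<le> A1 * (K1 * (\<integral>y. (u y)\<^sup>2 \<partial>M))" using int_B_le A1_pos by simp
  finally show "(\<integral>x. (kernel_op u x)\<^sup>2 \<partial>M) \<le> A1 * K1 * (\<integral>x. (u x)\<^sup>2 \<partial>M)" by (simp add: mult.assoc)
qed

lemma nonlocal_op_square_integrable:
  assumes u: "u \<in> square_integrable M"
  shows "nonlocal_op u \<in> square_integrable M"
    and "(\<integral>x. (nonlocal_op u x)\<^sup>2 \<partial>M) \<le> op_bound * (\<integral>x. (u x)\<^sup>2 \<partial>M)"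
proof -
  note K = kernel_op_square_integrable[OF u]
  have [measurable]: "u \<in> borel_measurable M" using u by (rule square_integrable_measurable)
  have pointwise: "(nonlocal_op u x)\<^sup>2 \<le> 2 * A1\<^sup>2 * (u x)\<^sup>2 + 2 * (kernel_op u x)\<^sup>2" for x
  proof -
    have "(row_mass x)\<^sup>2 \<le> A1\<^sup>2"
      using row_mass_nonneg[of x] row_bound[of x] by (intro power_mono) (auto simp: row_mass_def)
    then have "(row_mass x * u x)\<^sup>2 \<le> A1\<^sup>2 * (u x)\<^sup>2" by (simp add: power_mult_distrib mult_right_mono)
    then show ?thesis
      using square_add_le[of "row_mass x * u x" "- kernel_op u x"] by (simp add: nonlocal_op_def)
  qed
  have int: "integrable M (\<lambda>x. 2 * A1\<^sup>2 * (u x)\<^sup>2 + 2 * (kernel_op u x)\<^sup>2)"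
    using u K(1) by (simp add: square_integrable_integrable)
  show "nonlocal_op u \<in> square_integrable M"
    by (intro square_integrable_bounded[OF _ int pointwise]) measurable
  then have "(\<integral>x. (nonlocal_op u x)\<^sup>2 \<partial>M) \<le> (\<integral>x. 2 * A1\<^sup>2 * (u x)\<^sup>2 + 2 * (kernel_op u x)\<^sup>2 \<partial>M)"
    by (intro integral_mono[OF square_integrable_integrable int pointwise])
  also have "\<dots> = 2 * A1\<^sup>2 * (\<integral>x. (u x)\<^sup>2 \<partial>M) + 2 * (\<integral>x. (kernel_op u x)\<^sup>2 \<partial>M)"
    using u K(1) by (simp add: square_integrable_integrable)
  also have "\<dots> \<le> op_bound * (\<integral>x. (u x)\<^sup>2 \<partial>M)"
    using K(2) by (simp add: op_bound_def algebra_simps)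
  finally show "(\<integral>x. (nonlocal_op u x)\<^sup>2 \<partial>M) \<le> op_bound * (\<integral>x. (u x)\<^sup>2 \<partial>M)" .
qed

lemma nonlocal_op_diff:
  assumes u: "u \<in> square_integrable M" and v: "v \<in> square_integrable M"
  shows "AE x in M. nonlocal_op (\<lambda>y. u y - v y) x = nonlocal_op u x - nonlocal_op v x"
  using AE_integrable_kernel_op[OF u] AE_integrable_kernel_op[OF v]
proof eventually_elim
  case (elim x)
  have "kernel_op (\<lambda>y. u y - v y) x = kernel_op u x - kernel_op v x"
    using elim by (simp add: kernel_op_def left_diff_distrib)
  then show ?case by (simp add: nonlocal_op_def algebra_simps)
qed

lemma AE_nonlocal_op_eq:
  assumes u: "u \<in> square_integrable M"
  shows "AE x in M. (\<integral>y. (u x - u y) * G x y \<partial>M) = nonlocal_op u x"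
  using AE_integrable_kernel_op[OF u]
proof eventually_elim
  case (elim x)
  have "(\<integral>y. (u x - u y) * G x y \<partial>M) = (\<integral>y. u x * G x y - u y * G x y \<partial>M)"
    by (simp add: left_diff_distrib)
  also have "\<dots> = u x * row_mass x - kernel_op u x"
    using elim integrable_row[of x] by (simp add: row_mass_def kernel_op_def)
  finally show ?case by (simp add: nonlocal_op_def mult.commute)
qed

lemma integrable_square_times_mass:
  assumes u: "u \<in> square_integrable M"
  shows "integrable M (\<lambda>x. (u x)\<^sup>2 * row_mass x)" "integrable M (\<lambda>x. (u x)\<^sup>2 * column_mass x)"
  using P.integrable_fst[OF integrable_square_times_G(1)[OF u]]
    P.integrable_snd[OF integrable_square_times_G(2)[OF u]]
  by (simp_all add: row_mass_def column_mass_def)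

lemma integrable_product_times_G:
  assumes u: "u \<in> square_integrable M"
  shows "integrable (M \<Otimes>\<^sub>M M) (\<lambda>(x, y). u x * u y * G x y)"
proof -
  have int: "integrable (M \<Otimes>\<^sub>M M) (\<lambda>p. (\<lambda>(x, y). (u x)\<^sup>2 * G x y) p + (\<lambda>(x, y). (u y)\<^sup>2 * G x y) p)"
    by (rule Bochner_Integration.integrable_add[OF integrable_square_times_G[OF u]])
  show ?thesis
  proof (rule Bochner_Integration.integrable_bound[OF int])
    have [measurable]: "u \<in> borel_measurable M" using u by (rule square_integrable_measurable)
    show "(\<lambda>(x, y). u x * u y * G x y) \<in> borel_measurable (M \<Otimes>\<^sub>M M)" by measurable
    show "AE p in M \<Otimes>\<^sub>M M. norm ((\<lambda>(x, y). u x * u y * G x y) p)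
        \<le> norm ((\<lambda>(x, y). (u x)\<^sup>2 * G x y) p + (\<lambda>(x, y). (u y)\<^sup>2 * G x y) p)"
    proof (rule AE_I2, clarsimp)
      fix x y
      have "\<bar>u x * u y\<bar> * G x y \<le> ((u x)\<^sup>2 + (u y)\<^sup>2) * G x y"
        by (rule mult_right_mono[OF abs_mult_le_sum_squares G_nonneg])
      then show "\<bar>u x * u y * G x y\<bar> \<le> \<bar>(u x)\<^sup>2 * G x y + (u y)\<^sup>2 * G x y\<bar>"
        using G_nonneg[of x y] by (simp add: abs_mult algebra_simps)
    qed
  qed
qed

lemma integrable_energy_density:
  assumes u: "u \<in> square_integrable M"
  shows "integrable (M \<Otimes>\<^sub>M M) (\<lambda>(x, y). (u x - u y)\<^sup>2 * G x y)"
proof -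
  have "(\<lambda>(x, y). (u x - u y)\<^sup>2 * G x y) = (\<lambda>p. ((\<lambda>(x, y). (u x)\<^sup>2 * G x y) p
      + (\<lambda>(x, y). (u y)\<^sup>2 * G x y) p) - 2 * (\<lambda>(x, y). u x * u y * G x y) p)"
    by (auto simp: fun_eq_iff power2_eq_square algebra_simps)
  then show ?thesis
    using integrable_square_times_G[OF u] integrable_product_times_G[OF u] by simp
qed

lemma energy_identity:
  assumes u: "u \<in> square_integrable M"
  shows "2 * (\<integral>x. u x * nonlocal_op u x \<partial>M)
    = integral\<^sup>L (M \<Otimes>\<^sub>M M) (\<lambda>(x, y). (u x - u y)\<^sup>2 * G x y)
      + (\<integral>x. (u x)\<^sup>2 * row_mass x \<partial>M) - (\<integral>x. (u x)\<^sup>2 * column_mass x \<partial>M)"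
proof -
  note ix = integrable_square_times_G(1)[OF u] and iy = integrable_square_times_G(2)[OF u]
  note ixy = integrable_product_times_G[OF u]
  define P where "P = (\<integral>x. (u x)\<^sup>2 * row_mass x \<partial>M)"
  define Q where "Q = (\<integral>x. (u x)\<^sup>2 * column_mass x \<partial>M)"
  define X where "X = (\<integral>x. u x * kernel_op u x \<partial>M)"
  have P_eq: "integral\<^sup>L (M \<Otimes>\<^sub>M M) (\<lambda>(x, y). (u x)\<^sup>2 * G x y) = P"
    using P.integral_fst[OF ix] by (simp add: P_def row_mass_def)
  have Q_eq: "integral\<^sup>L (M \<Otimes>\<^sub>M M) (\<lambda>(x, y). (u y)\<^sup>2 * G x y) = Q"
    using P.integral_snd[OF iy] by (simp add: Q_def column_mass_def)
  have X_eq: "integral\<^sup>L (M \<Otimes>\<^sub>M M) (\<lambda>(x, y). u x * u y * G x y) = X"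
    using P.integral_fst[OF ixy] by (simp add: X_def kernel_op_def mult.assoc)
  have "integral\<^sup>L (M \<Otimes>\<^sub>M M) (\<lambda>(x, y). (u x - u y)\<^sup>2 * G x y)
      = integral\<^sup>L (M \<Otimes>\<^sub>M M) (\<lambda>p. ((\<lambda>(x, y). (u x)\<^sup>2 * G x y) p + (\<lambda>(x, y). (u y)\<^sup>2 * G x y) p)
          - 2 * (\<lambda>(x, y). u x * u y * G x y) p)"
    by (rule Bochner_Integration.integral_cong) (auto simp: power2_eq_square algebra_simps)
  also have "\<dots> = P + Q - 2 * X" using ix iy ixy P_eq Q_eq X_eq by simp
  finally have D_eq: "integral\<^sup>L (M \<Otimes>\<^sub>M M) (\<lambda>(x, y). (u x - u y)\<^sup>2 * G x y) = P + Q - 2 * X" .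
  have int_uK: "integrable M (\<lambda>x. u x * kernel_op u x)"
    by (rule integrable_mult_square_integrable[OF u kernel_op_square_integrable(1)[OF u]])
  have "(\<integral>x. u x * nonlocal_op u x \<partial>M) = (\<integral>x. (u x)\<^sup>2 * row_mass x - u x * kernel_op u x \<partial>M)"
    by (rule Bochner_Integration.integral_cong) (auto simp: nonlocal_op_def power2_eq_square algebra_simps)
  also have "\<dots> = P - X"
    using integrable_square_times_mass(1)[OF u] int_uK by (simp add: P_def X_def)
  finally show ?thesis using D_eq by (simp add: P_def Q_def)
qed

lemma integral_interaction_fst:
  assumes u: "u \<in> square_integrable M"
  shows "integrable (M \<Otimes>\<^sub>M M) (\<lambda>(x, y). indicator \<Omega>c y * ((u x)\<^sup>2 * G x y))"
    and "integrable M (\<lambda>x. (u x)\<^sup>2 * (\<integral>y. indicator \<Omega>c y * G x y \<partial>M))"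
    and "integral\<^sup>L (M \<Otimes>\<^sub>M M) (\<lambda>(x, y). indicator \<Omega>c y * ((u x)\<^sup>2 * G x y))
      = (\<integral>x. (u x)\<^sup>2 * (\<integral>y. indicator \<Omega>c y * G x y \<partial>M) \<partial>M)"
proof -
  have inner: "(\<integral>y. indicator \<Omega>c y * ((u x)\<^sup>2 * G x y) \<partial>M) = (u x)\<^sup>2 * (\<integral>y. indicator \<Omega>c y * G x y \<partial>M)" for x
    by (subst integral_mult_right_zero[symmetric]) (simp add: ac_simps)
  show int: "integrable (M \<Otimes>\<^sub>M M) (\<lambda>(x, y). indicator \<Omega>c y * ((u x)\<^sup>2 * G x y))"
  proof (rule Bochner_Integration.integrable_bound[OF integrable_square_times_G(1)[OF u]])
    have [measurable]: "u \<in> borel_measurable M" using u by (rule square_integrable_measurable)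
    show "(\<lambda>(x, y). indicator \<Omega>c y * ((u x)\<^sup>2 * G x y)) \<in> borel_measurable (M \<Otimes>\<^sub>M M)"
      by measurable
  qed (intro AE_I2, auto simp: indicator_def G_nonneg)
  show "integrable M (\<lambda>x. (u x)\<^sup>2 * (\<integral>y. indicator \<Omega>c y * G x y \<partial>M))"
    using P.integrable_fst[OF int] unfolding inner .
  show "integral\<^sup>L (M \<Otimes>\<^sub>M M) (\<lambda>(x, y). indicator \<Omega>c y * ((u x)\<^sup>2 * G x y))
      = (\<integral>x. (u x)\<^sup>2 * (\<integral>y. indicator \<Omega>c y * G x y \<partial>M) \<partial>M)"
    using P.integral_fst[OF int] unfolding inner by simp
qed

lemma integral_interaction_snd:
  assumes u: "u \<in> square_integrable M"
  shows "integrable (M \<Otimes>\<^sub>M M) (\<lambda>(x, y). indicator \<Omega>c x * ((u y)\<^sup>2 * G x y))"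
    and "integrable M (\<lambda>x. (u x)\<^sup>2 * (\<integral>y. indicator \<Omega>c y * G y x \<partial>M))"
    and "integral\<^sup>L (M \<Otimes>\<^sub>M M) (\<lambda>(x, y). indicator \<Omega>c x * ((u y)\<^sup>2 * G x y))
      = (\<integral>x. (u x)\<^sup>2 * (\<integral>y. indicator \<Omega>c y * G y x \<partial>M) \<partial>M)"
proof -
  have inner: "(\<integral>x. indicator \<Omega>c x * ((u y)\<^sup>2 * G x y) \<partial>M) = (u y)\<^sup>2 * (\<integral>x. indicator \<Omega>c x * G x y \<partial>M)" for y
    by (subst integral_mult_right_zero[symmetric]) (simp add: ac_simps)
  show int: "integrable (M \<Otimes>\<^sub>M M) (\<lambda>(x, y). indicator \<Omega>c x * ((u y)\<^sup>2 * G x y))"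
  proof (rule Bochner_Integration.integrable_bound[OF integrable_square_times_G(2)[OF u]])
    have [measurable]: "u \<in> borel_measurable M" using u by (rule square_integrable_measurable)
    show "(\<lambda>(x, y). indicator \<Omega>c x * ((u y)\<^sup>2 * G x y)) \<in> borel_measurable (M \<Otimes>\<^sub>M M)"
      by measurable
  qed (intro AE_I2, auto simp: indicator_def G_nonneg)
  show "integrable M (\<lambda>x. (u x)\<^sup>2 * (\<integral>y. indicator \<Omega>c y * G y x \<partial>M))"
    using P.integrable_snd[OF int] unfolding inner .
  show "integral\<^sup>L (M \<Otimes>\<^sub>M M) (\<lambda>(x, y). indicator \<Omega>c x * ((u y)\<^sup>2 * G x y))
      = (\<integral>x. (u x)\<^sup>2 * (\<integral>y. indicator \<Omega>c y * G y x \<partial>M) \<partial>M)"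
    using P.integral_snd[OF int] unfolding inner by simp
qed

text \<open>The interaction domain carries the coercivity: every pair \<open>(x, y)\<close> with one point in
  \<open>\<Omega>c\<close> contributes the full \<open>(u x)\<^sup>2 G x y\<close> or \<open>(u y)\<^sup>2 G x y\<close> to the Dirichlet energy, since
  \<open>u\<close> vanishes there.\<close>

lemma interaction_energy:
  assumes u: "u \<in> trial_space"
  shows "2 * K2 * (\<integral>x. (u x)\<^sup>2 \<partial>M) \<le> integral\<^sup>L (M \<Otimes>\<^sub>M M) (\<lambda>(x, y). (u x - u y)\<^sup>2 * G x y)"
proof -
  have uL: "u \<in> square_integrable M" using u by (rule trial_space_square_integrable)
  define H where "H = (\<lambda>(x, y). indicator \<Omega>c y * ((u x)\<^sup>2 * G x y) + indicator \<Omega>c x * ((u y)\<^sup>2 * G x y))"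
  note H1 = integral_interaction_fst[OF uL] and H2 = integral_interaction_snd[OF uL]
  have int_H: "integrable (M \<Otimes>\<^sub>M M) H"
    unfolding H_def using Bochner_Integration.integrable_add[OF H1(1) H2(1)] by (simp add: case_prod_unfold)
  have "(\<integral>x. 2 * K2 * (u x)\<^sup>2 \<partial>M)
      \<le> (\<integral>x. (u x)\<^sup>2 * (\<integral>y. indicator \<Omega>c y * G x y \<partial>M) + (u x)\<^sup>2 * (\<integral>y. indicator \<Omega>c y * G y x \<partial>M) \<partial>M)"
  proof (rule integral_mono)
    show "integrable M (\<lambda>x. 2 * K2 * (u x)\<^sup>2)" using square_integrable_integrable[OF uL] by simp
    show "integrable M (\<lambda>x. (u x)\<^sup>2 * (\<integral>y. indicator \<Omega>c y * G x y \<partial>M) + (u x)\<^sup>2 * (\<integral>y. indicator \<Omega>c y * G y x \<partial>M))"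
      using H1(2) H2(2) by simp
    fix x
    show "2 * K2 * (u x)\<^sup>2 \<le> (u x)\<^sup>2 * (\<integral>y. indicator \<Omega>c y * G x y \<partial>M) + (u x)\<^sup>2 * (\<integral>y. indicator \<Omega>c y * G y x \<partial>M)"
    proof (cases "x \<in> \<Omega>s")
      case True
      have "(\<integral>y. indicator \<Omega>c y * (G x y + G y x) \<partial>M)
          = (\<integral>y. indicator \<Omega>c y * G x y \<partial>M) + (\<integral>y. indicator \<Omega>c y * G y x \<partial>M)"
        using integrable_row[of x] integrable_column[of x]
        by (simp add: distrib_left integrable_real_mult_indicator mult.commute[of "indicator \<Omega>c _"])
      then show ?thesis
        using mult_right_mono[OF interaction_bound[OF True], of "(u x)\<^sup>2"] by (simp add: algebra_simps)
    qed (simp add: trial_space_vanishes[OF u])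
  qed
  also have "\<dots> = integral\<^sup>L (M \<Otimes>\<^sub>M M) H"
    using H1(2,3) H2(2,3) Bochner_Integration.integral_add[OF H1(1) H2(1)]
    by (simp add: H_def case_prod_unfold)
  also have "\<dots> \<le> integral\<^sup>L (M \<Otimes>\<^sub>M M) (\<lambda>(x, y). (u x - u y)\<^sup>2 * G x y)"
  proof (rule integral_mono[OF int_H])
    show "integrable (M \<Otimes>\<^sub>M M) (\<lambda>(x, y). (u x - u y)\<^sup>2 * G x y)"
      by (rule integrable_energy_density[OF uL])
    fix p :: "'a \<times> 'a"
    obtain x y where p: "p = (x, y)" by fastforce
    have "y \<in> \<Omega>c \<Longrightarrow> u y = 0" "x \<in> \<Omega>c \<Longrightarrow> u x = 0"
      using disjoint trial_space_vanishes[OF u] by auto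
    then show "H p \<le> (case p of (x, y) \<Rightarrow> (u x - u y)\<^sup>2 * G x y)"
      by (cases "x \<in> \<Omega>c"; cases "y \<in> \<Omega>c") (simp_all add: H_def p G_nonneg)
  qed
  finally show ?thesis by simp
qed

lemma nonlocal_op_coercive:
  assumes u: "u \<in> trial_space"
  shows "K2 * (\<integral>x. (u x)\<^sup>2 \<partial>M) \<le> (\<integral>x. u x * nonlocal_op u x \<partial>M)"
proof -
  have uL: "u \<in> square_integrable M" using u by (rule trial_space_square_integrable)
  have "(\<integral>x. (u x)\<^sup>2 * column_mass x \<partial>M) \<le> (\<integral>x. (u x)\<^sup>2 * row_mass x \<partial>M)"
  proof (rule integral_mono[OF integrable_square_times_mass(2,1)[OF uL]])
    show "(u x)\<^sup>2 * column_mass x \<le> (u x)\<^sup>2 * row_mass x" for x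
      using column_le_row[of x] trial_space_vanishes[OF u, of x]
      by (cases "x \<in> \<Omega>s") (simp_all add: row_mass_def column_mass_def mult_left_mono)
  qed
  then show ?thesis using energy_identity[OF uL] interaction_energy[OF u] by linarith
qed

end

context nonlocal_problem
begin

lemma nonlocal_residual_le:
  assumes u: "u \<in> square_integrable M" and v: "v \<in> square_integrable M" and f: "f \<in> square_integrable M"
  shows "(\<integral>x. (indicator \<Omega>s x * (nonlocal_op u x - f x))\<^sup>2 \<partial>M)
    \<le> 2 * op_bound * (\<integral>x. (u x - v x)\<^sup>2 \<partial>M) + 2 * (\<integral>x. (indicator \<Omega>s x * (nonlocal_op v x - f x))\<^sup>2 \<partial>M)"
proof -
  have uv: "(\<lambda>x. u x - v x) \<in> square_integrable M" by (rule square_integrable_diff[OF u v])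
  note Suv = nonlocal_op_square_integrable[OF uv]
  have res: "(\<lambda>x. indicator \<Omega>s x * (nonlocal_op w x - f x)) \<in> square_integrable M"
    if "w \<in> square_integrable M" for w
    by (intro square_integrable_mult_indicator square_integrable_diff nonlocal_op_square_integrable that f)
       simp
  have "AE x in M. (indicator \<Omega>s x * (nonlocal_op u x - f x))\<^sup>2
      \<le> 2 * (nonlocal_op (\<lambda>x. u x - v x) x)\<^sup>2 + 2 * (indicator \<Omega>s x * (nonlocal_op v x - f x))\<^sup>2"
    using nonlocal_op_diff[OF u v]
  proof eventually_elim
    case (elim x)
    have "indicator \<Omega>s x * (nonlocal_op u x - f x)
        = indicator \<Omega>s x * nonlocal_op (\<lambda>x. u x - v x) x + indicator \<Omega>s x * (nonlocal_op v x - f x)"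
      by (simp add: elim algebra_simps)
    then show ?case
      using square_add_le[of "indicator \<Omega>s x * nonlocal_op (\<lambda>x. u x - v x) x"
          "indicator \<Omega>s x * (nonlocal_op v x - f x)"]
      by (auto simp: indicator_def)
  qed
  then have "(\<integral>x. (indicator \<Omega>s x * (nonlocal_op u x - f x))\<^sup>2 \<partial>M)
      \<le> (\<integral>x. 2 * (nonlocal_op (\<lambda>x. u x - v x) x)\<^sup>2 + 2 * (indicator \<Omega>s x * (nonlocal_op v x - f x))\<^sup>2 \<partial>M)"
    by (intro integral_mono_AE square_integrable_integrable res u)
       (use square_integrable_integrable[OF Suv(1)] square_integrable_integrable[OF res[OF v]] in simp)
  also have "\<dots> = 2 * (\<integral>x. (nonlocal_op (\<lambda>x. u x - v x) x)\<^sup>2 \<partial>M)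
      + 2 * (\<integral>x. (indicator \<Omega>s x * (nonlocal_op v x - f x))\<^sup>2 \<partial>M)"
    using square_integrable_integrable[OF Suv(1)] square_integrable_integrable[OF res[OF v]] by simp
  finally show ?thesis using Suv(2) by linarith
qed

lemma nonlocal_op_injective:
  assumes w: "w \<in> trial_space" and zero: "AE x in M. x \<in> \<Omega>s \<longrightarrow> nonlocal_op w x = 0"
  shows "AE x in M. w x = 0"
proof -
  have "(\<integral>x. w x * nonlocal_op w x \<partial>M) = (\<integral>x. 0 \<partial>M)"
    by (rule integral_cong_AE) (use zero trial_space_vanishes[OF w] trial_space_square_integrable[OF w]
        in \<open>auto elim!: eventually_mono\<close>)
  then have "K2 * (\<integral>x. (w x)\<^sup>2 \<partial>M) \<le> 0" using nonlocal_op_coercive[OF w] by simp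
  moreover have "0 \<le> (\<integral>x. (w x)\<^sup>2 \<partial>M)" by (rule integral_nonneg_AE) simp
  ultimately have "(\<integral>x. (w x)\<^sup>2 \<partial>M) = 0" using K2_pos by (simp add: mult_le_0_iff)
  then show ?thesis using square_integral_eq_0_iff[OF trial_space_square_integrable[OF w]] by simp
qed

lemma nonlocal_problem_stability:
  assumes u: "u \<in> trial_space" and f: "f \<in> square_integrable M"
    and eq: "AE x in M. x \<in> \<Omega>s \<longrightarrow> nonlocal_op u x = f x"
  shows "K2\<^sup>2 * (\<integral>x. (u x)\<^sup>2 \<partial>M) \<le> (\<integral>x. (f x)\<^sup>2 \<partial>M)"
proof -
  have uL: "u \<in> square_integrable M" using u by (rule trial_space_square_integrable)
  define U where "U = (\<integral>x. (u x)\<^sup>2 \<partial>M)"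
  define F where "F = (\<integral>x. (f x)\<^sup>2 \<partial>M)"
  have U: "0 \<le> U" and F: "0 \<le> F" unfolding U_def F_def by (simp_all add: integral_nonneg_AE)
  have "(\<integral>x. u x * nonlocal_op u x \<partial>M) = (\<integral>x. u x * f x \<partial>M)"
    by (rule integral_cong_AE) (use eq trial_space_vanishes[OF u] uL f in \<open>auto elim!: eventually_mono\<close>)
  then have "K2 * U \<le> (\<integral>x. u x * f x \<partial>M)" using nonlocal_op_coercive[OF u] by (simp add: U_def)
  then have "(K2 * U)\<^sup>2 \<le> (\<integral>x. u x * f x \<partial>M)\<^sup>2"
    by (rule power_mono) (use K2_pos U in simp)
  also have "\<dots> \<le> U * F" unfolding U_def F_def by (rule Cauchy_Schwarz_integral[OF uL f])
  finally have "U * (K2\<^sup>2 * U) \<le> U * F" by (simp add: power2_eq_square mult_ac)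
  then have "K2\<^sup>2 * U \<le> F"
    using U F by (cases "U = 0") (simp_all add: mult_le_cancel_left)
  then show ?thesis by (simp add: U_def F_def)
qed

text \<open>The Lax--Milgram argument in explicit form: \<open>u \<mapsto> u - \<omega> (S u - f)\<close>, restricted to \<open>\<Omega>s\<close>,
  is a contraction for the step \<open>\<omega> = K2 / op_bound\<close>.\<close>

definition step_size :: real where "step_size = K2 / op_bound"
definition contraction_factor :: real where "contraction_factor = max 0 (1 - K2\<^sup>2 / op_bound)"

lemma step_size_pos: "0 < step_size"
  unfolding step_size_def using K2_pos op_bound_pos by simp

lemma contraction_factor_bounds: "0 \<le> contraction_factor" "contraction_factor < 1"
  unfolding contraction_factor_def using K2_pos op_bound_pos by simp_all

lemma gradient_step_contracts:
  assumes d: "d \<in> trial_space"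
  shows "(\<integral>x. (indicator \<Omega>s x * (d x - step_size * nonlocal_op d x))\<^sup>2 \<partial>M)
    \<le> contraction_factor * (\<integral>x. (d x)\<^sup>2 \<partial>M)"
proof -
  have dL: "d \<in> square_integrable M" using d by (rule trial_space_square_integrable)
  note S = nonlocal_op_square_integrable[OF dL]
  have e: "(\<lambda>x. d x - step_size * nonlocal_op d x) \<in> square_integrable M"
    by (intro square_integrable_diff square_integrable_cmult dL S(1))
  have "(\<integral>x. (indicator \<Omega>s x * (d x - step_size * nonlocal_op d x))\<^sup>2 \<partial>M)
      \<le> (\<integral>x. (d x - step_size * nonlocal_op d x)\<^sup>2 \<partial>M)"
    using square_integrable_integrable[OF square_integrable_mult_indicator[OF sets_\<Omega>s e]]
      square_integrable_integrable[OF e]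
    by (intro integral_mono) (auto simp: indicator_def)
  also have "\<dots> = (\<integral>x. (d x)\<^sup>2 \<partial>M) - 2 * step_size * (\<integral>x. d x * nonlocal_op d x \<partial>M)
      + step_size\<^sup>2 * (\<integral>x. (nonlocal_op d x)\<^sup>2 \<partial>M)"
  proof -
    have "(\<integral>x. (d x - step_size * nonlocal_op d x)\<^sup>2 \<partial>M)
        = (\<integral>x. (d x)\<^sup>2 - 2 * step_size * (d x * nonlocal_op d x) + step_size\<^sup>2 * (nonlocal_op d x)\<^sup>2 \<partial>M)"
      by (rule Bochner_Integration.integral_cong) (auto simp: power2_eq_square algebra_simps)
    then show ?thesis
      using square_integrable_integrable[OF dL] square_integrable_integrable[OF S(1)]
        integrable_mult_square_integrable[OF dL S(1)] by simp
  qed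
  also have "\<dots> \<le> (1 - 2 * step_size * K2 + step_size\<^sup>2 * op_bound) * (\<integral>x. (d x)\<^sup>2 \<partial>M)"
  proof -
    have "2 * step_size * (K2 * (\<integral>x. (d x)\<^sup>2 \<partial>M)) \<le> 2 * step_size * (\<integral>x. d x * nonlocal_op d x \<partial>M)"
      using nonlocal_op_coercive[OF d] step_size_pos by (intro mult_left_mono) simp_all
    moreover have "step_size\<^sup>2 * (\<integral>x. (nonlocal_op d x)\<^sup>2 \<partial>M) \<le> step_size\<^sup>2 * (op_bound * (\<integral>x. (d x)\<^sup>2 \<partial>M))"
      using S(2) by (intro mult_left_mono) simp_all
    ultimately show ?thesis by (simp add: algebra_simps)
  qed
  also have "\<dots> \<le> contraction_factor * (\<integral>x. (d x)\<^sup>2 \<partial>M)"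
    using op_bound_pos
    by (intro mult_right_mono) (simp_all add: step_size_def contraction_factor_def field_simps
        power2_eq_square integral_nonneg_AE)
  finally show ?thesis .
qed

primrec picard_iterate :: "('a \<Rightarrow> real) \<Rightarrow> nat \<Rightarrow> 'a \<Rightarrow> real" where
  "picard_iterate f 0 = (\<lambda>x. 0)"
| "picard_iterate f (Suc k) = (\<lambda>x. indicator \<Omega>s x
     * (picard_iterate f k x - step_size * (nonlocal_op (picard_iterate f k) x - f x)))"

definition picard_increment :: "('a \<Rightarrow> real) \<Rightarrow> nat \<Rightarrow> 'a \<Rightarrow> real" where
  "picard_increment f k x = picard_iterate f (Suc k) x - picard_iterate f k x"

lemma picard_iterate_trial_space:
  assumes f: "f \<in> square_integrable M"
  shows "picard_iterate f k \<in> trial_space"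
proof (induction k)
  case 0
  show ?case by (rule trial_spaceI) (auto intro!: square_integrableI)
next
  case (Suc k)
  then have "picard_iterate f k \<in> square_integrable M" by (rule trial_space_square_integrable)
  then show ?case
    unfolding picard_iterate.simps
    by (intro trial_space_restrict square_integrable_diff square_integrable_cmult
        nonlocal_op_square_integrable f)
qed

lemma picard_increment_trial_space:
  "f \<in> square_integrable M \<Longrightarrow> picard_increment f k \<in> trial_space"
  unfolding picard_increment_def[abs_def]
  by (intro trial_space_diff picard_iterate_trial_space)

lemma picard_increment_eq:
  assumes f: "f \<in> square_integrable M"
  shows "picard_increment f k x = - step_size * (indicator \<Omega>s x * (nonlocal_op (picard_iterate f k) x - f x))"
  using trial_space_vanishes[OF picard_iterate_trial_space[OF f, of k], of x]
  by (cases "x \<in> \<Omega>s") (simp_all add: picard_increment_def)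

lemma picard_increment_Suc:
  assumes f: "f \<in> square_integrable M"
  shows "AE x in M. picard_increment f (Suc k) x
    = indicator \<Omega>s x * (picard_increment f k x - step_size * nonlocal_op (picard_increment f k) x)"
proof -
  note iterate = trial_space_square_integrable[OF picard_iterate_trial_space[OF f]]
  have increment: "picard_increment f k = (\<lambda>y. picard_iterate f (Suc k) y - picard_iterate f k y)"
    by (simp add: fun_eq_iff picard_increment_def)
  show ?thesis
    using nonlocal_op_diff[OF iterate[of "Suc k"] iterate[of k]]
  proof eventually_elim
    case (elim x)
    then have "nonlocal_op (picard_increment f k) x
        = nonlocal_op (picard_iterate f (Suc k)) x - nonlocal_op (picard_iterate f k) x"
      by (simp only: increment)
    then show ?case
      by (simp add: picard_increment_eq[OF f] indicator_def algebra_simps del: picard_iterate.simps)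
         (metis distrib_left)
  qed
qed

lemma picard_increment_decay:
  assumes f: "f \<in> square_integrable M"
  shows "(\<integral>x. (picard_increment f k x)\<^sup>2 \<partial>M) \<le> (\<integral>x. (picard_increment f 0 x)\<^sup>2 \<partial>M) * contraction_factor ^ k"
proof (induction k)
  case (Suc k)
  have [measurable]: "picard_increment f j \<in> borel_measurable M" for j
    using trial_space_square_integrable[OF picard_increment_trial_space[OF f]] by measurable
  have "(\<integral>x. (picard_increment f (Suc k) x)\<^sup>2 \<partial>M)
      = (\<integral>x. (indicator \<Omega>s x * (picard_increment f k x - step_size * nonlocal_op (picard_increment f k) x))\<^sup>2 \<partial>M)"
  proof (rule integral_cong_AE)
    show "AE x in M. (picard_increment f (Suc k) x)\<^sup>2
        = (indicator \<Omega>s x * (picard_increment f k x - step_size * nonlocal_op (picard_increment f k) x))\<^sup>2"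
      using picard_increment_Suc[OF f, of k] by eventually_elim simp
  qed measurable
  also have "\<dots> \<le> contraction_factor * (\<integral>x. (picard_increment f k x)\<^sup>2 \<partial>M)"
    by (rule gradient_step_contracts[OF picard_increment_trial_space[OF f]])
  also have "\<dots> \<le> (\<integral>x. (picard_increment f 0 x)\<^sup>2 \<partial>M) * contraction_factor ^ Suc k"
    using mult_left_mono[OF Suc contraction_factor_bounds(1)] by (simp add: mult_ac)
  finally show ?case .
qed simp

lemma sum_picard_increment: "(\<Sum>j<k. picard_increment f j x) = picard_iterate f k x"
  unfolding picard_increment_def by (subst sum_lessThan_telescope) simp

theorem nonlocal_problem_solvable:
  assumes f: "f \<in> square_integrable M"
  obtains u where "u \<in> trial_space" "AE x in M. x \<in> \<Omega>s \<longrightarrow> nonlocal_op u x = f x"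
proof -
  note increment = picard_increment_trial_space[OF f]
  obtain u where uL: "u \<in> square_integrable M"
    and u0: "\<And>x. (\<And>j. picard_increment f j x = 0) \<Longrightarrow> u x = 0"
    and lim: "(\<lambda>k. \<integral>x. (u x - (\<Sum>j<k. picard_increment f j x))\<^sup>2 \<partial>M) \<longlonglongrightarrow> 0"
    using square_integrable_series[OF trial_space_square_integrable[OF increment]
        picard_increment_decay[OF f] contraction_factor_bounds] by blast
  have u: "u \<in> trial_space"
    using uL u0 trial_space_vanishes[OF increment] by (intro trial_spaceI) auto
  define residual where "residual v x = indicator \<Omega>s x * (nonlocal_op v x - f x)" for v x
  define C0 where "C0 = (\<integral>x. (picard_increment f 0 x)\<^sup>2 \<partial>M)"
  define b where "b k = 2 * op_bound * (\<integral>x. (u x - picard_iterate f k x)\<^sup>2 \<partial>M)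
    + 2 * (C0 * contraction_factor ^ k) / step_size\<^sup>2" for k
  have "(\<integral>x. (residual u x)\<^sup>2 \<partial>M) \<le> b k" for k
  proof -
    have "(\<integral>x. (picard_increment f k x)\<^sup>2 \<partial>M) = step_size\<^sup>2 * (\<integral>x. (residual (picard_iterate f k) x)\<^sup>2 \<partial>M)"
      by (simp add: picard_increment_eq[OF f] residual_def power_mult_distrib del: picard_iterate.simps)
    then have "(\<integral>x. (residual (picard_iterate f k) x)\<^sup>2 \<partial>M) \<le> C0 * contraction_factor ^ k / step_size\<^sup>2"
      using picard_increment_decay[OF f, of k] step_size_pos by (simp add: C0_def field_simps)
    then show ?thesis
      using nonlocal_residual_le[OF uL trial_space_square_integrable[OF picard_iterate_trial_space[OF f]] f, of k]
      by (simp add: b_def residual_def)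
  qed
  moreover have "b \<longlonglongrightarrow> 2 * op_bound * 0 + 2 * (C0 * 0) / step_size\<^sup>2"
    unfolding b_def using lim[unfolded sum_picard_increment] contraction_factor_bounds step_size_pos
    by (intro tendsto_intros LIMSEQ_power_zero) auto
  ultimately have "(\<integral>x. (residual u x)\<^sup>2 \<partial>M) \<le> 0"
    by (intro LIMSEQ_le_const[where X = b]) auto
  moreover have "0 \<le> (\<integral>x. (residual u x)\<^sup>2 \<partial>M)" by (simp add: integral_nonneg_AE)
  moreover have "residual u \<in> square_integrable M"
    unfolding residual_def[abs_def]
    by (intro square_integrable_mult_indicator square_integrable_diff nonlocal_op_square_integrable uL f)
       simp
  ultimately have "AE x in M. residual u x = 0" using square_integral_eq_0_iff by fastforce
  then have "AE x in M. x \<in> \<Omega>s \<longrightarrow> nonlocal_op u x = f x"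
    by eventually_elim (simp add: residual_def indicator_def)
  with u show thesis by (rule that)
qed

end

section \<open>The Gaussian kernel\<close>

lemma matrix_inv_invertible:
  fixes N :: "real^'n^'n"
  assumes "invertible N"
  shows "N ** matrix_inv N = mat 1" "matrix_inv N ** N = mat 1"
  using someI_ex[OF assms[unfolded invertible_def]] unfolding matrix_inv_def by auto

lemma continuous_on_det:
  fixes F :: "'a::topological_space \<Rightarrow> real^'n^'n"
  assumes "\<And>i j. continuous_on S (\<lambda>t. F t $ i $ j)"
  shows "continuous_on S (\<lambda>t. det (F t))"
  unfolding det_def by (intro continuous_intros assms)

lemma det_eq_0_kernel:
  fixes N :: "real^'n^'n"
  assumes "det N = 0"
  obtains \<xi> where "\<xi> \<noteq> 0" "N *v \<xi> = 0"
proof -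
  have "\<not> invertible N" using assms by (simp add: invertible_det_nz)
  then show ?thesis
    using that unfolding invertible_left_inverse matrix_left_invertible_ker by blast
qed

text \<open>Along the segment from the identity to a positive definite \<open>N\<close> every matrix is positive
  definite, hence nonsingular; so the determinant cannot change sign.\<close>

lemma det_pos_if_pos_def:
  fixes N :: "real^'n^'n"
  assumes pd: "\<And>\<xi>. \<xi> \<noteq> 0 \<Longrightarrow> 0 < \<xi> \<bullet> (N *v \<xi>)"
  shows "0 < det N"
proof -
  define H where "H t = t *\<^sub>R N + (1 - t) *\<^sub>R mat 1" for t :: real
  have nonsingular: "det (H t) \<noteq> 0" if t: "0 \<le> t" "t \<le> 1" for t
  proof
    assume "det (H t) = 0"
    then obtain \<xi> where \<xi>: "\<xi> \<noteq> 0" "H t *v \<xi> = 0" by (rule det_eq_0_kernel)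
    have "\<xi> \<bullet> (H t *v \<xi>) = t * (\<xi> \<bullet> (N *v \<xi>)) + (1 - t) * (\<xi> \<bullet> \<xi>)"
      by (simp add: H_def matrix_vector_mult_add_rdistrib inner_add_right
          flip: scaleR_matrix_vector_assoc)
    moreover have "0 < t * (\<xi> \<bullet> (N *v \<xi>)) + (1 - t) * (\<xi> \<bullet> \<xi>)"
      using t pd[OF \<xi>(1)] \<xi>(1)
      by (cases "t = 0") (auto intro: add_pos_nonneg)
    ultimately show False using \<xi>(2) by simp
  qed
  have "continuous_on {0..1} (\<lambda>t. det (H t))"
    by (rule continuous_on_det) (simp add: H_def, intro continuous_intros)
  moreover have "det (H 0) = 1" "H 1 = N" by (simp_all add: H_def)
  ultimately show ?thesis
    using IVT2'[of "\<lambda>t. det (H t)" 1 0 0] nonsingular by force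
qed

locale elliptic_matrix_field =
  fixes A :: "real^'n \<Rightarrow> real^'n^'n" and lam :: real
  assumes elliptic: "\<And>x \<xi>. lam * (norm \<xi>)\<^sup>2 \<le> \<xi> \<bullet> (A x *v \<xi>)" and lam_pos: "0 < lam"
    and continuous_entries: "\<And>i j. continuous_on UNIV (\<lambda>x. A x $ i $ j)"
begin

lemma det_scaled_pos: "0 < c \<Longrightarrow> 0 < det (c *\<^sub>R A x)"
proof (rule det_pos_if_pos_def)
  fix \<xi> :: "real^'n"
  assume "0 < c" "\<xi> \<noteq> 0"
  then have "0 < lam * (norm \<xi>)\<^sup>2" using lam_pos by simp
  then show "0 < \<xi> \<bullet> ((c *\<^sub>R A x) *v \<xi>)"
    using elliptic[of \<xi> x] \<open>0 < c\<close> by (simp add: flip: scaleR_matrix_vector_assoc)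
qed

lemma det_pos: "0 < det (A x)"
  using det_scaled_pos[of 1 x] by simp

lemma A_matrix_inv: "A x *v (matrix_inv (A x) *v w) = w"
  using det_pos[of x] by (simp add: matrix_vector_mul_assoc matrix_inv_invertible invertible_det_nz)

lemma qform_lower_bound: "lam * (norm (matrix_inv (A x) *v (y - x)))\<^sup>2 \<le> qform A x y"
proof -
  define z where "z = matrix_inv (A x) *v (y - x)"
  have "qform A x y = z \<bullet> (A x *v z)"
    unfolding qform_def z_def by (simp add: A_matrix_inv inner_commute)
  then show ?thesis using elliptic[of z x] by (simp add: z_def)
qed

lemma qform_nonneg: "0 \<le> qform A x y"
  using qform_lower_bound[of x y] lam_pos by (smt (verit) mult_nonneg_nonneg zero_le_power2)

lemma continuous_on_entries_fst:
  "continuous_on UNIV (\<lambda>p::(real^'n) \<times> 'b::topological_space. A (fst p) $ i $ j)"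
  by (rule continuous_on_compose2[OF continuous_entries continuous_on_fst]) auto

text \<open>Cramer's rule writes the entries of \<open>A(x)\<^sup>-\<^sup>1 (y - x)\<close> as quotients of determinants, which
  makes the quadratic form visibly continuous.\<close>

lemma continuous_on_qform: "continuous_on UNIV (\<lambda>p::(real^'n) \<times> (real^'n). qform A (fst p) (snd p))"
proof -
  define C where "C k p = det (\<chi> i j. if j = k then (snd p - fst p) $ i else A (fst p) $ i $ j)"
    for k and p :: "(real^'n) \<times> (real^'n)"
  have "matrix_inv (A x) *v w = (\<chi> k. det (\<chi> i j. if j = k then w $ i else A x $ i $ j) / det (A x))" for x w
    using cramer[of "A x" "matrix_inv (A x) *v w" w] det_pos[of x] A_matrix_inv by simp
  then have eq: "qform A (fst p) (snd p) = (snd p - fst p) \<bullet> (\<chi> k. C k p / det (A (fst p)))" for p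
    by (simp add: qform_def C_def)
  have "continuous_on UNIV (C k)" for k
    unfolding C_def
  proof (rule continuous_on_det)
    fix i j
    show "continuous_on UNIV (\<lambda>p::(real^'n) \<times> (real^'n).
        (\<chi> i j. if j = k then (snd p - fst p) $ i else A (fst p) $ i $ j) $ i $ j)"
      using continuous_on_entries_fst[of i j] by (cases "j = k") (simp_all, intro continuous_intros)
  qed
  moreover have "continuous_on UNIV (\<lambda>p::(real^'n) \<times> (real^'n). det (A (fst p)))"
    by (rule continuous_on_det) (rule continuous_on_entries_fst)
  ultimately show ?thesis
    unfolding eq using det_pos by (intro continuous_intros) (auto simp: less_imp_neq[symmetric])
qed

lemma continuous_on_gamma_kernel:
  assumes "0 < \<delta>"
  shows "continuous_on UNIV (\<lambda>p::(real^'n) \<times> (real^'n). gamma_kernel A \<delta> (fst p) (snd p))"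
proof -
  have "continuous_on UNIV (\<lambda>p::(real^'n) \<times> (real^'n). det ((\<delta>\<^sup>2) *\<^sub>R A (fst p)))"
    by (rule continuous_on_det) (simp, intro continuous_intros continuous_on_entries_fst)
  moreover have "det ((\<delta>\<^sup>2) *\<^sub>R A x) \<noteq> 0" for x using det_scaled_pos[of "\<delta>\<^sup>2" x] assms by simp
  ultimately show ?thesis
    unfolding gamma_kernel_def using assms
    by (intro continuous_intros continuous_on_qform) auto
qed

end

lemma sigma_finite_lebesgue: "sigma_finite_measure (lebesgue :: 'a::euclidean_space measure)"
proof
  obtain C :: "'a set set" where "countable C" "C \<subseteq> sets lborel" "\<Union>C = space lborel"
    "\<forall>c\<in>C. emeasure lborel c \<noteq> \<infinity>"
    using lborel.sigma_finite_countable by blast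
  then show "\<exists>C::'a set set. countable C \<and> C \<subseteq> sets lebesgue \<and> \<Union>C = space lebesgue
      \<and> (\<forall>c\<in>C. emeasure lebesgue c \<noteq> \<infinity>)"
    by (intro exI[of _ C]) (auto simp: subset_eq)
qed

lemma borel_measurable_lebesgue_pair:
  fixes h :: "'a::euclidean_space \<times> 'b::euclidean_space \<Rightarrow> real"
  assumes "h \<in> borel_measurable borel"
  shows "h \<in> borel_measurable (lebesgue \<Otimes>\<^sub>M lebesgue)"
proof -
  have h: "h \<in> borel_measurable (lborel \<Otimes>\<^sub>M lborel)" using assms by (simp add: lborel_prod)
  have "(\<lambda>p. (fst p, snd p)) \<in> (lebesgue \<Otimes>\<^sub>M lebesgue) \<rightarrow>\<^sub>M (lborel \<Otimes>\<^sub>M lborel :: ('a \<times> 'b) measure)"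
    by (intro measurable_Pair measurable_compose[OF measurable_fst measurable_completion]
        measurable_compose[OF measurable_snd measurable_completion]) simp_all
  from measurable_compose[OF this h] show ?thesis by simp
qed

text \<open>A projection of a closed set along an open (hence \<open>\<sigma>\<close>-compact) set of first coordinates
  is a countable union of compact sets.\<close>

lemma borel_projection_closed:
  fixes S :: "'a::euclidean_space set" and T :: "('a \<times> 'b::euclidean_space) set"
  assumes "open S" "closed T"
  shows "{y. \<exists>x\<in>S. (x, y) \<in> T} \<in> sets borel"
proof -
  obtain C :: "nat \<Rightarrow> 'a set" where C: "\<And>n. compact (C n)" "\<And>n. C n \<subseteq> S" "\<Union>(range C) = S"
    using open_Union_compact_subsets[OF assms(1)] by metis
  define K where "K n m = snd ` ((C n \<times> cball 0 (real m)) \<inter> T)" for n m :: nat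
  have "compact (K n m)" for n m
    unfolding K_def using C(1) assms(2)
    by (intro compact_continuous_image continuous_intros compact_Int_closed compact_Times) auto
  then have K: "K n m \<in> sets borel" for n m by (simp add: borel_closed compact_imp_closed)
  have "{y. \<exists>x\<in>S. (x, y) \<in> T} = (\<Union>n. \<Union>m. K n m)"
  proof (intro set_eqI iffI)
    fix y assume "y \<in> {y. \<exists>x\<in>S. (x, y) \<in> T}"
    then obtain x n where "(x, y) \<in> T" "x \<in> C n" using C(3) by auto
    moreover obtain m :: nat where "norm y \<le> real m" using real_arch_simple by blast
    ultimately show "y \<in> (\<Union>n. \<Union>m. K n m)" unfolding K_def by force
  qed (use C(2) in \<open>fastforce simp: K_def\<close>)
  then show ?thesis using K by (simp add: sets.countable_UN)
qed

context elliptic_matrix_field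
begin

lemma bounded_qform_sublevel:
  assumes "bounded S"
  shows "bounded {y. \<exists>x\<in>S. qform A x y \<le> r}"
proof -
  define s where "s x = (\<Sum>i\<in>UNIV. \<Sum>j\<in>UNIV. \<bar>A x $ i $ j\<bar>)" for x
  have "continuous_on UNIV s" unfolding s_def by (intro continuous_intros continuous_entries)
  then have "compact (s ` closure S)"
    by (rule compact_continuous_image[OF continuous_on_subset]) (use assms in auto)
  then obtain B where B: "\<And>x. x \<in> closure S \<Longrightarrow> \<bar>s x\<bar> \<le> B"
    using compact_imp_bounded[of "s ` closure S"] by (auto simp: bounded_iff)
  obtain Bs where Bs: "\<And>x. x \<in> S \<Longrightarrow> norm x \<le> Bs" using assms by (auto simp: bounded_iff)
  define R where "R = Bs + B * sqrt (\<bar>r\<bar> / lam)"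
  have "norm y \<le> R" if "x \<in> S" "qform A x y \<le> r" for x y
  proof -
    define z where "z = matrix_inv (A x) *v (y - x)"
    have "lam * (norm z)\<^sup>2 \<le> r" using qform_lower_bound[of x y] that(2) by (simp add: z_def)
    then have "(norm z)\<^sup>2 \<le> \<bar>r\<bar> / lam" using lam_pos by (simp add: field_simps)
    then have z: "norm z \<le> sqrt (\<bar>r\<bar> / lam)" by (simp add: real_le_rsqrt)
    have sB: "s x \<le> B" using B[of x] that(1) closure_subset[of S] by auto
    have s0: "0 \<le> s x" by (simp add: s_def sum_nonneg)
    have "norm (y - x) = norm (A x *v z)" by (simp add: z_def A_matrix_inv)
    also have "\<dots> \<le> onorm ((*v) (A x)) * norm z" by (rule onorm) simp
    also have "\<dots> \<le> s x * norm z"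
      by (rule mult_right_mono[OF _ norm_ge_zero]) (simp add: s_def onorm_le_matrix_component_sum)
    also have "\<dots> \<le> B * sqrt (\<bar>r\<bar> / lam)"
      by (rule mult_mono[OF sB z]) (use s0 sB in auto)
    finally show ?thesis using Bs[OF that(1)] norm_triangle_sub[of y x] by (simp add: R_def)
  qed
  then show ?thesis by (auto simp: bounded_iff)
qed

lemma gamma_kernel_nonneg: "0 < \<delta> \<Longrightarrow> 0 \<le> gamma_kernel A \<delta> x y"
  using det_scaled_pos[of "\<delta>\<^sup>2" x] by (simp add: gamma_kernel_def)

lemma gamma_kernel_bounded:
  assumes \<delta>: "0 < \<delta>" and "bounded S"
  obtains C where "\<And>x y. x \<in> S \<Longrightarrow> gamma_kernel A \<delta> x y \<le> C"
proof (cases "S = {}")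
  case False
  have "continuous_on UNIV (\<lambda>x. det ((\<delta>\<^sup>2) *\<^sub>R A x))"
    by (rule continuous_on_det) (simp, intro continuous_intros continuous_entries)
  then have "continuous_on (closure S) (\<lambda>x. det ((\<delta>\<^sup>2) *\<^sub>R A x))"
    by (rule continuous_on_subset) simp
  then obtain x0 where "\<forall>x\<in>closure S. det ((\<delta>\<^sup>2) *\<^sub>R A x0) \<le> det ((\<delta>\<^sup>2) *\<^sub>R A x)"
    using continuous_attains_inf[of "closure S"] \<open>bounded S\<close> False by auto
  then have m0: "\<And>x. x \<in> S \<Longrightarrow> det ((\<delta>\<^sup>2) *\<^sub>R A x0) \<le> det ((\<delta>\<^sup>2) *\<^sub>R A x)"
    using closure_subset by blast
  define m where "m = (2 * pi) ^ CARD('n) * det ((\<delta>\<^sup>2) *\<^sub>R A x0)"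
  have m: "0 < m" using det_scaled_pos[of "\<delta>\<^sup>2" x0] \<delta> by (simp add: m_def)
  have "gamma_kernel A \<delta> x y \<le> 2 / \<delta>\<^sup>2 * (1 / sqrt m)" if "x \<in> S" for x y
  proof -
    have "1 / sqrt ((2 * pi) ^ CARD('n) * det ((\<delta>\<^sup>2) *\<^sub>R A x)) \<le> 1 / sqrt m"
      using m m0[OF that] det_scaled_pos[of "\<delta>\<^sup>2" x] \<delta>
      by (intro divide_left_mono real_sqrt_le_mono mult_pos_pos) (auto simp: m_def)
    moreover have "exp (- qform A x y / (2 * \<delta>\<^sup>2)) \<le> 1" using qform_nonneg[of x y] \<delta> by simp
    ultimately have "2 / \<delta>\<^sup>2 * (1 / sqrt ((2 * pi) ^ CARD('n) * det ((\<delta>\<^sup>2) *\<^sub>R A x)))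
        * exp (- qform A x y / (2 * \<delta>\<^sup>2)) \<le> 2 / \<delta>\<^sup>2 * (1 / sqrt m) * 1"
      using \<delta> m by (intro mult_mono mult_left_mono) auto
    then show ?thesis by (simp add: gamma_kernel_def)
  qed
  then show ?thesis using that by blast
qed (use that in blast)

end

section \<open>The weak formulation\<close>

lemma L2_iff_zero_extension:
  assumes "\<Omega> \<in> sets lebesgue"
  shows "u \<in> L2 \<Omega> \<longleftrightarrow> (\<lambda>x. indicator \<Omega> x * u x) \<in> square_integrable lebesgue"
proof -
  have "(\<lambda>x. (indicator \<Omega> x * u x)\<^sup>2) = (\<lambda>x. indicator \<Omega> x * (u x)\<^sup>2)"
    by (auto simp: fun_eq_iff indicator_def)
  then show ?thesis
    using assms by (simp add: L2_def square_integrable_def borel_measurable_restrict_space_iff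
        integrable_restrict_space)
qed

lemma L2_norm_zero_extension:
  assumes "\<Omega> \<in> sets lebesgue"
  shows "L2_norm \<Omega> u = sqrt (\<integral>x. (indicator \<Omega> x * u x)\<^sup>2 \<partial>lebesgue)"
proof -
  have "(\<lambda>x. (indicator \<Omega> x * u x)\<^sup>2) = (\<lambda>x. indicator \<Omega> x * (u x)\<^sup>2)"
    by (auto simp: fun_eq_iff indicator_def)
  then show ?thesis using assms by (simp add: L2_norm_def integral_restrict_space)
qed

lemma integrable_restrict_mult_square_integrable:
  assumes "S \<in> sets M" "v \<in> square_integrable M" "g \<in> square_integrable M"
  shows "integrable (restrict_space M S) (\<lambda>x. v x * g x)"
  using integrable_mult_indicator[OF assms(1) integrable_mult_square_integrable[OF assms(2,3)]] assms(1)
  by (simp add: integrable_restrict_space)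

locale truncated_kernel_problem = elliptic_matrix_field A lam
  for A :: "real^'n \<Rightarrow> real^'n^'n" and lam :: real +
  fixes \<delta> \<alpha> K1 K2 :: real and \<Omega>s :: "(real^'n) set"
  assumes \<delta>_pos: "0 < \<delta>" and K1_pos: "0 < K1" and K2_pos: "0 < K2"
    and bounded_\<Omega>s: "bounded \<Omega>s" and open_\<Omega>s: "open \<Omega>s"
    and row_integral_le: "\<And>x. x \<in> \<Omega>s \<union> interaction_domain A \<delta> \<alpha> \<Omega>s \<Longrightarrow>
      (\<integral>y\<in>\<Omega>s \<union> interaction_domain A \<delta> \<alpha> \<Omega>s. gamma_trunc A \<delta> \<alpha> x y \<partial>lebesgue) \<le> 2 / \<delta>\<^sup>2"
    and column_integral_le: "\<And>x. x \<in> \<Omega>s \<union> interaction_domain A \<delta> \<alpha> \<Omega>s \<Longrightarrow>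
      (\<integral>y\<in>\<Omega>s \<union> interaction_domain A \<delta> \<alpha> \<Omega>s. gamma_trunc A \<delta> \<alpha> y x \<partial>lebesgue) \<le> K1"
    and interaction_integral_ge: "\<And>x. x \<in> \<Omega>s \<union> interaction_domain A \<delta> \<alpha> \<Omega>s \<Longrightarrow>
      K2 \<le> (\<integral>y\<in>interaction_domain A \<delta> \<alpha> \<Omega>s. (gamma_trunc A \<delta> \<alpha> x y + gamma_trunc A \<delta> \<alpha> y x) / 2 \<partial>lebesgue)"
    and antisymmetric_part_nonneg: "\<And>x. x \<in> \<Omega>s \<union> interaction_domain A \<delta> \<alpha> \<Omega>s \<Longrightarrow>
      0 \<le> (\<integral>y\<in>\<Omega>s \<union> interaction_domain A \<delta> \<alpha> \<Omega>s. (gamma_trunc A \<delta> \<alpha> x y - gamma_trunc A \<delta> \<alpha> y x) / 2 \<partial>lebesgue)"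
begin

abbreviation \<Omega>c :: "(real^'n) set" where "\<Omega>c \<equiv> interaction_domain A \<delta> \<alpha> \<Omega>s"
abbreviation \<Omega> :: "(real^'n) set" where "\<Omega> \<equiv> \<Omega>s \<union> \<Omega>c"
abbreviation \<gamma> :: "real^'n \<Rightarrow> real^'n \<Rightarrow> real" where "\<gamma> \<equiv> gamma_trunc A \<delta> \<alpha>"

definition radius :: real where "radius = \<delta>\<^sup>2 * chi2_quantile CARD('n) \<alpha>"

lemma interaction_domain_eq: "\<Omega>c = {y. \<exists>x\<in>\<Omega>s. qform A x y \<le> radius} - \<Omega>s"
  by (auto simp: interaction_domain_def influence_region_def radius_def)

lemma disjoint_domains: "\<Omega>s \<inter> \<Omega>c = {}"
  by (auto simp: interaction_domain_eq)

lemma sets_\<Omega>s[measurable]: "\<Omega>s \<in> sets lebesgue"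
  using open_\<Omega>s by simp

lemma sets_\<Omega>c[measurable]: "\<Omega>c \<in> sets lebesgue"
proof -
  have "closed {p :: (real^'n) \<times> (real^'n). qform A (fst p) (snd p) \<le> radius}"
    by (intro closed_Collect_le continuous_on_qform continuous_on_const)
  from borel_projection_closed[OF open_\<Omega>s this]
  have "{y. \<exists>x\<in>\<Omega>s. qform A x y \<le> radius} \<in> sets lebesgue" by simp
  then show ?thesis unfolding interaction_domain_eq using sets_\<Omega>s by blast
qed

lemma sets_\<Omega>[measurable]: "\<Omega> \<in> sets lebesgue"
  by simp

lemma bounded_\<Omega>: "bounded \<Omega>"
  using bounded_qform_sublevel[OF bounded_\<Omega>s, of radius] bounded_\<Omega>s
  by (simp add: interaction_domain_eq bounded_diff)

lemma gamma_trunc_nonneg: "0 \<le> \<gamma> x y"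
  using gamma_kernel_nonneg[OF \<delta>_pos] by (simp add: gamma_trunc_def)

lemma gamma_trunc_measurable: "(\<lambda>p. \<gamma> (fst p) (snd p)) \<in> borel_measurable (lebesgue \<Otimes>\<^sub>M lebesgue)"
proof (rule borel_measurable_lebesgue_pair)
  define S where "S = {p :: (real^'n) \<times> (real^'n). qform A (fst p) (snd p) \<le> radius}"
  have "closed S" unfolding S_def by (intro closed_Collect_le continuous_on_qform continuous_on_const)
  moreover have "(\<lambda>p. \<gamma> (fst p) (snd p)) = (\<lambda>p. indicator S p * gamma_kernel A \<delta> (fst p) (snd p))"
    by (auto simp: fun_eq_iff gamma_trunc_def influence_region_def S_def radius_def indicator_def)
  ultimately show "(\<lambda>p. \<gamma> (fst p) (snd p)) \<in> borel_measurable borel"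
    using borel_measurable_continuous_onI[OF continuous_on_gamma_kernel[OF \<delta>_pos]]
    by (simp add: borel_measurable_indicator')
qed

text \<open>Cutting \<open>\<gamma>\<close> off outside \<open>\<Omega> \<times> \<Omega>\<close> turns the integrals over \<open>\<Omega>\<close> of the weak form into
  integrals over the whole space.\<close>

definition kernel :: "real^'n \<Rightarrow> real^'n \<Rightarrow> real" where
  "kernel x y = indicator \<Omega> x * indicator \<Omega> y * \<gamma> x y"

lemma kernel_measurable: "(\<lambda>p. kernel (fst p) (snd p)) \<in> borel_measurable (lebesgue \<Otimes>\<^sub>M lebesgue)"
  using gamma_trunc_measurable unfolding kernel_def by measurable

lemma kernel_nonneg: "0 \<le> kernel x y"
  by (simp add: kernel_def gamma_trunc_nonneg)

lemma kernel_integrable: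
  "integrable lebesgue (\<lambda>y. kernel x y)" "integrable lebesgue (\<lambda>y. kernel y x)"
proof -
  obtain C0 where "\<And>x y. x \<in> \<Omega> \<Longrightarrow> gamma_kernel A \<delta> x y \<le> C0"
    using gamma_kernel_bounded[OF \<delta>_pos bounded_\<Omega>] by blast
  then obtain C where C: "\<And>x y. x \<in> \<Omega> \<Longrightarrow> gamma_kernel A \<delta> x y \<le> C" and "0 \<le> C"
    by (meson max.cobounded1 max.cobounded2 order_trans)
  have bound: "norm (kernel x y) \<le> norm (C * indicator \<Omega> y)" "norm (kernel y x) \<le> norm (C * indicator \<Omega> y)" for x y
    using C[of x y] C[of y x] gamma_trunc_nonneg[of x y] gamma_trunc_nonneg[of y x] \<open>0 \<le> C\<close>
    by (auto simp: kernel_def indicator_def gamma_trunc_def)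
  have int: "integrable lebesgue (\<lambda>y. C * indicator \<Omega> y)"
    using bounded_set_imp_lmeasurable[OF bounded_\<Omega> sets_\<Omega>] by (simp add: fmeasurable_def)
  have "(\<lambda>y. kernel x y) \<in> borel_measurable lebesgue"
    using measurable_Pair2[OF kernel_measurable, of x] by simp
  then show "integrable lebesgue (\<lambda>y. kernel x y)"
    by (rule Bochner_Integration.integrable_bound[OF int]) (intro AE_I2 bound)
  have "(\<lambda>p. kernel (snd p) (fst p)) \<in> borel_measurable (lebesgue \<Otimes>\<^sub>M lebesgue)"
    using measurable_compose[OF measurable_pair_swap' kernel_measurable] by (simp add: case_prod_unfold)
  from measurable_Pair2[OF this, of x] have "(\<lambda>y. kernel y x) \<in> borel_measurable lebesgue"
    by simp
  then show "integrable lebesgue (\<lambda>y. kernel y x)"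
    by (rule Bochner_Integration.integrable_bound[OF int]) (intro AE_I2 bound)
qed

lemma kernel_row_integral:
  "x \<in> \<Omega> \<Longrightarrow> (\<integral>y. kernel x y \<partial>lebesgue) = (\<integral>y\<in>\<Omega>. \<gamma> x y \<partial>lebesgue)"
  and kernel_column_integral:
  "x \<in> \<Omega> \<Longrightarrow> (\<integral>y. kernel y x \<partial>lebesgue) = (\<integral>y\<in>\<Omega>. \<gamma> y x \<partial>lebesgue)"
  by (simp_all add: kernel_def set_lebesgue_integral_def mult_ac)

sublocale weak: nonlocal_problem lebesgue \<Omega>s \<Omega>c kernel "2 / \<delta>\<^sup>2" K1 K2
proof
  show "(\<integral>y. kernel x y \<partial>lebesgue) \<le> 2 / \<delta>\<^sup>2" for x
    using row_integral_le[of x] \<delta>_pos by (cases "x \<in> \<Omega>") (simp_all add: kernel_row_integral kernel_def set_lebesgue_integral_def)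
  show "(\<integral>y. kernel y x \<partial>lebesgue) \<le> K1" for x
    using column_integral_le[of x] K1_pos by (cases "x \<in> \<Omega>") (simp_all add: kernel_column_integral kernel_def set_lebesgue_integral_def)
  show "2 * K2 \<le> (\<integral>y. indicator \<Omega>c y * (kernel x y + kernel y x) \<partial>lebesgue)" if "x \<in> \<Omega>s" for x
  proof -
    have "(\<integral>y. indicator \<Omega>c y * (kernel x y + kernel y x) \<partial>lebesgue)
        = 2 * (\<integral>y\<in>\<Omega>c. (\<gamma> x y + \<gamma> y x) / 2 \<partial>lebesgue)"
      unfolding set_lebesgue_integral_def
      by (subst integral_mult_right_zero[symmetric], rule Bochner_Integration.integral_cong)
         (use that in \<open>auto simp: kernel_def indicator_def\<close>)
    then show ?thesis using interaction_integral_ge[of x] that by simp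
  qed
  show "(\<integral>y. kernel y x \<partial>lebesgue) \<le> (\<integral>y. kernel x y \<partial>lebesgue)" if "x \<in> \<Omega>s" for x
  proof -
    have "(\<integral>y\<in>\<Omega>. (\<gamma> x y - \<gamma> y x) / 2 \<partial>lebesgue) = (\<integral>y. (kernel x y - kernel y x) / 2 \<partial>lebesgue)"
      unfolding set_lebesgue_integral_def
      by (rule Bochner_Integration.integral_cong) (use that in \<open>auto simp: kernel_def indicator_def\<close>)
    also have "\<dots> = ((\<integral>y. kernel x y \<partial>lebesgue) - (\<integral>y. kernel y x \<partial>lebesgue)) / 2"
      using kernel_integrable[of x] by simp
    finally show ?thesis using antisymmetric_part_nonneg[of x] that by simp
  qed
qed (use sigma_finite_measure.sigma_finite_countable[OF sigma_finite_lebesgue] \<delta>_pos in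
      \<open>simp_all add: disjoint_domains kernel_measurable kernel_nonneg kernel_integrable K2_pos\<close>)

end

context truncated_kernel_problem
begin

lemma AE_lebesgue_on_\<Omega>: "(AE x in lebesgue_on \<Omega>. P x) \<longleftrightarrow> (AE x in lebesgue. x \<in> \<Omega> \<longrightarrow> P x)"
  by (rule AE_restrict_space_iff) simp

lemma square_integrable_L2: "v \<in> square_integrable lebesgue \<Longrightarrow> v \<in> L2 \<Omega>"
  by (simp add: L2_iff_zero_extension square_integrable_mult_indicator)

lemma L2_n0_zero_extension:
  assumes "w \<in> L2_n0 \<Omega> \<Omega>c"
  shows "(\<lambda>x. indicator \<Omega> x * w x) \<in> square_integrable lebesgue"
    and "AE x in lebesgue. x \<in> \<Omega>c \<longrightarrow> w x = 0"
  using assms by (auto simp: L2_n0_def L2_iff_zero_extension AE_lebesgue_on_\<Omega> elim: eventually_mono)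

lemma L2_n0I: "v \<in> square_integrable lebesgue \<Longrightarrow> (\<And>x. x \<in> \<Omega>c \<Longrightarrow> v x = 0) \<Longrightarrow> v \<in> L2_n0 \<Omega> \<Omega>c"
  by (simp add: L2_n0_def square_integrable_L2)

lemma trial_space_zero_extension:
  "u \<in> weak.trial_space \<Longrightarrow> (\<lambda>x. indicator \<Omega> x * u x) = u"
  using weak.trial_space_vanishes by (fastforce simp: indicator_def)

lemma trial_space_L2_n0:
  assumes "u \<in> weak.trial_space"
  shows "u \<in> L2_n0 \<Omega> \<Omega>c"
proof (rule L2_n0I)
  show "u \<in> square_integrable lebesgue" using assms by (rule weak.trial_space_square_integrable)
  show "u x = 0" if "x \<in> \<Omega>c" for x
    using that disjoint_domains weak.trial_space_vanishes[OF assms, of x] by blast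
qed

lemma bform_eq_nonlocal_op:
  assumes w: "(\<lambda>x. indicator \<Omega> x * w x) \<in> square_integrable lebesgue" and v: "v \<in> L2 \<Omega>"
  shows "bform \<gamma> \<Omega> w v = (\<integral>x. v x * weak.nonlocal_op (\<lambda>x. indicator \<Omega> x * w x) x \<partial>lebesgue_on \<Omega>)"
proof -
  define w1 where "w1 x = indicator \<Omega> x * w x" for x
  have [measurable]: "w1 \<in> borel_measurable lebesgue" using w by (simp add: w1_def[abs_def])
  have [measurable]: "v \<in> borel_measurable (lebesgue_on \<Omega>)" using v by (simp add: L2_def)
  have "bform \<gamma> \<Omega> w v = (\<integral>x. v x * (\<integral>y. (w1 x - w1 y) * kernel x y \<partial>lebesgue) \<partial>lebesgue_on \<Omega>)"
    unfolding bform_def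
  proof (rule Bochner_Integration.integral_cong[OF refl])
    fix x assume "x \<in> space (lebesgue_on \<Omega>)"
    then have x: "x \<in> \<Omega>" by simp
    have "(\<integral>y. (w x - w y) * v x * \<gamma> x y \<partial>lebesgue_on \<Omega>)
        = (\<integral>y. indicator \<Omega> y * ((w x - w y) * v x * \<gamma> x y) \<partial>lebesgue)"
      by (simp add: integral_restrict_space)
    also have "\<dots> = (\<integral>y. v x * ((w1 x - w1 y) * kernel x y) \<partial>lebesgue)"
      by (rule Bochner_Integration.integral_cong) (use x in \<open>auto simp: w1_def kernel_def indicator_def\<close>)
    finally show "(\<integral>y. (w x - w y) * v x * \<gamma> x y \<partial>lebesgue_on \<Omega>)
        = v x * (\<integral>y. (w1 x - w1 y) * kernel x y \<partial>lebesgue)" by simp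
  qed
  also have "\<dots> = (\<integral>x. v x * weak.nonlocal_op w1 x \<partial>lebesgue_on \<Omega>)"
  proof (rule integral_cong_AE)
    have "(\<lambda>x. \<integral>y. (w1 x - w1 y) * kernel x y \<partial>lebesgue) \<in> borel_measurable lebesgue"
      by (rule weak.borel_measurable_lebesgue_integral) (use kernel_measurable in measurable)
    then have [measurable]: "(\<lambda>x. \<integral>y. (w1 x - w1 y) * kernel x y \<partial>lebesgue) \<in> borel_measurable (lebesgue_on \<Omega>)"
      by (rule measurable_restrict_space1)
    have [measurable]: "weak.nonlocal_op w1 \<in> borel_measurable (lebesgue_on \<Omega>)"
      by (rule measurable_restrict_space1) measurable
    show "(\<lambda>x. v x * (\<integral>y. (w1 x - w1 y) * kernel x y \<partial>lebesgue)) \<in> borel_measurable (lebesgue_on \<Omega>)"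
      by measurable
    show "(\<lambda>x. v x * weak.nonlocal_op w1 x) \<in> borel_measurable (lebesgue_on \<Omega>)"
      by measurable
    show "AE x in lebesgue_on \<Omega>. v x * (\<integral>y. (w1 x - w1 y) * kernel x y \<partial>lebesgue) = v x * weak.nonlocal_op w1 x"
      using weak.AE_nonlocal_op_eq[OF w[folded w1_def]] unfolding AE_lebesgue_on_\<Omega>
      by eventually_elim simp
  qed
  finally show ?thesis by (simp add: w1_def[abs_def])
qed

lemma weak_solution_of_strong:
  assumes f: "f \<in> L2 \<Omega>" and u: "u \<in> weak.trial_space"
    and eq: "AE x in lebesgue. x \<in> \<Omega>s \<longrightarrow> weak.nonlocal_op u x = indicator \<Omega> x * f x"
    and v: "v \<in> L2_n0 \<Omega> \<Omega>c"
  shows "bform \<gamma> \<Omega> u v = Ffun \<Omega> f v"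
proof -
  have uL: "u \<in> square_integrable lebesgue" using u by (rule weak.trial_space_square_integrable)
  have vL: "v \<in> L2 \<Omega>" using v by (simp add: L2_n0_def)
  have [measurable]: "v \<in> borel_measurable (lebesgue_on \<Omega>)" "f \<in> borel_measurable (lebesgue_on \<Omega>)"
    using vL f by (simp_all add: L2_def)
  have [measurable]: "u \<in> borel_measurable lebesgue" using uL by (rule square_integrable_measurable)
  have [measurable]: "weak.nonlocal_op u \<in> borel_measurable (lebesgue_on \<Omega>)"
    by (intro measurable_restrict_space1) measurable
  have "bform \<gamma> \<Omega> u v = (\<integral>x. v x * weak.nonlocal_op u x \<partial>lebesgue_on \<Omega>)"
    using bform_eq_nonlocal_op[of u v] uL vL by (simp add: trial_space_zero_extension[OF u])
  also have "\<dots> = (\<integral>x. f x * v x \<partial>lebesgue_on \<Omega>)"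
  proof (rule integral_cong_AE)
    show "AE x in lebesgue_on \<Omega>. v x * weak.nonlocal_op u x = f x * v x"
      unfolding AE_lebesgue_on_\<Omega> using eq L2_n0_zero_extension(2)[OF v]
    proof eventually_elim
      case (elim x)
      show ?case
      proof
        assume "x \<in> \<Omega>"
        then consider "x \<in> \<Omega>s" | "x \<in> \<Omega>c" by blast
        then show "v x * weak.nonlocal_op u x = f x * v x" by cases (use elim in simp_all)
      qed
    qed
    show "(\<lambda>x. v x * weak.nonlocal_op u x) \<in> borel_measurable (lebesgue_on \<Omega>)" by measurable
    show "(\<lambda>x. f x * v x) \<in> borel_measurable (lebesgue_on \<Omega>)" by measurable
  qed
  finally show ?thesis by (simp add: Ffun_def)
qed

lemma restrict_L2_n0_trial_space:
  assumes "w \<in> L2_n0 \<Omega> \<Omega>c"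
  shows "(\<lambda>x. indicator \<Omega>s x * w x) \<in> weak.trial_space"
proof -
  have "(\<lambda>x. indicator \<Omega>s x * w x) = (\<lambda>x. indicator \<Omega>s x * (indicator \<Omega> x * w x))"
    by (auto simp: fun_eq_iff indicator_def)
  then show ?thesis using weak.trial_space_restrict[OF L2_n0_zero_extension(1)[OF assms]] by simp
qed

lemma nonlocal_op_restrict_L2_n0:
  assumes w: "w \<in> L2_n0 \<Omega> \<Omega>c" and x: "x \<in> \<Omega>s"
  shows "weak.nonlocal_op (\<lambda>x. indicator \<Omega> x * w x) x = weak.nonlocal_op (\<lambda>x. indicator \<Omega>s x * w x) x"
proof -
  have [measurable]: "(\<lambda>x. indicator \<Omega> x * w x) \<in> borel_measurable lebesgue"
    "(\<lambda>x. indicator \<Omega>s x * w x) \<in> borel_measurable lebesgue"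
    using L2_n0_zero_extension(1)[OF w] weak.trial_space_square_integrable[OF restrict_L2_n0_trial_space[OF w]]
    by auto
  have "AE y in lebesgue. indicator \<Omega> y * w y = indicator \<Omega>s y * w y"
    using L2_n0_zero_extension(2)[OF w] by eventually_elim (auto simp: indicator_def)
  then have "weak.kernel_op (\<lambda>x. indicator \<Omega> x * w x) x = weak.kernel_op (\<lambda>x. indicator \<Omega>s x * w x) x"
    unfolding weak.kernel_op_def by (intro integral_cong_AE) (auto elim!: eventually_mono)
  then show ?thesis using x by (simp add: weak.nonlocal_op_def)
qed

text \<open>Testing the weak equation with the residual \<open>v\<close> of the restriction \<open>w0\<close> of \<open>w\<close> to \<open>\<Omega>s\<close>
  gives \<open>\<parallel>v\<parallel>\<^sup>2 = 0\<close>.\<close>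

lemma strong_of_weak_solution:
  assumes f: "f \<in> L2 \<Omega>" and w: "w \<in> L2_n0 \<Omega> \<Omega>c"
    and weak_eq: "\<forall>v \<in> L2_n0 \<Omega> \<Omega>c. bform \<gamma> \<Omega> w v = Ffun \<Omega> f v"
  shows "AE x in lebesgue. x \<in> \<Omega>s \<longrightarrow>
    weak.nonlocal_op (\<lambda>x. indicator \<Omega>s x * w x) x = indicator \<Omega> x * f x"
proof -
  define w0 where "w0 x = indicator \<Omega>s x * w x" for x
  define f1 where "f1 x = indicator \<Omega> x * f x" for x
  define v where "v x = indicator \<Omega>s x * (weak.nonlocal_op w0 x - f1 x)" for x
  have w0: "w0 \<in> square_integrable lebesgue"
    unfolding w0_def[abs_def] by (rule weak.trial_space_square_integrable[OF restrict_L2_n0_trial_space[OF w]])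
  have f1: "f1 \<in> square_integrable lebesgue" using f unfolding f1_def by (simp add: L2_iff_zero_extension)
  have vL: "v \<in> square_integrable lebesgue" unfolding v_def
    by (intro square_integrable_mult_indicator square_integrable_diff weak.nonlocal_op_square_integrable
        w0 f1 sets_\<Omega>s)
  have "bform \<gamma> \<Omega> w v = (\<integral>x. v x * weak.nonlocal_op (\<lambda>x. indicator \<Omega> x * w x) x \<partial>lebesgue_on \<Omega>)"
    by (rule bform_eq_nonlocal_op[OF L2_n0_zero_extension(1)[OF w] square_integrable_L2[OF vL]])
  also have "\<dots> = (\<integral>x. v x * weak.nonlocal_op w0 x \<partial>lebesgue_on \<Omega>)"
  proof (rule Bochner_Integration.integral_cong[OF refl])
    show "v x * weak.nonlocal_op (\<lambda>x. indicator \<Omega> x * w x) x = v x * weak.nonlocal_op w0 x" for x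
      by (cases "x \<in> \<Omega>s") (simp_all add: v_def w0_def[abs_def] nonlocal_op_restrict_L2_n0[OF w])
  qed
  finally have bform_v: "bform \<gamma> \<Omega> w v = (\<integral>x. v x * weak.nonlocal_op w0 x \<partial>lebesgue_on \<Omega>)" .
  have "Ffun \<Omega> f v = (\<integral>x. v x * f1 x \<partial>lebesgue_on \<Omega>)"
    unfolding Ffun_def by (rule Bochner_Integration.integral_cong) (auto simp: f1_def)
  moreover have "v \<in> L2_n0 \<Omega> \<Omega>c" using vL disjoint_domains by (intro L2_n0I) (auto simp: v_def indicator_def)
  ultimately have eq: "(\<integral>x. v x * weak.nonlocal_op w0 x \<partial>lebesgue_on \<Omega>) = (\<integral>x. v x * f1 x \<partial>lebesgue_on \<Omega>)"
    using weak_eq bform_v by simp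
  have v2: "(v x)\<^sup>2 = v x * weak.nonlocal_op w0 x - v x * f1 x" for x
    by (cases "x \<in> \<Omega>s") (simp_all add: v_def power2_eq_square algebra_simps)
  have "(\<integral>x. (v x)\<^sup>2 \<partial>lebesgue) = (\<integral>x. indicator \<Omega> x *\<^sub>R (v x)\<^sup>2 \<partial>lebesgue)"
    by (rule Bochner_Integration.integral_cong) (auto simp: v_def indicator_def)
  also have "\<dots> = (\<integral>x. v x * weak.nonlocal_op w0 x - v x * f1 x \<partial>lebesgue_on \<Omega>)"
    unfolding v2 by (rule integral_restrict_space[symmetric]) simp
  also have "\<dots> = 0"
    using eq integrable_restrict_mult_square_integrable[OF sets_\<Omega> vL] f1
      weak.nonlocal_op_square_integrable(1)[OF w0] by simp
  finally have "AE x in lebesgue. v x = 0" using square_integral_eq_0_iff[OF vL] by simp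
  then show ?thesis
    by eventually_elim (auto simp: v_def f1_def w0_def[abs_def])
qed

lemma weak_solution_unique:
  assumes f: "f \<in> L2 \<Omega>" and u: "u \<in> weak.trial_space"
    and u_eq: "AE x in lebesgue. x \<in> \<Omega>s \<longrightarrow> weak.nonlocal_op u x = indicator \<Omega> x * f x"
    and w: "w \<in> L2_n0 \<Omega> \<Omega>c" and w_eq: "\<forall>v \<in> L2_n0 \<Omega> \<Omega>c. bform \<gamma> \<Omega> w v = Ffun \<Omega> f v"
  shows "AE x in lebesgue_on \<Omega>. w x = u x"
proof -
  define w0 where "w0 x = indicator \<Omega>s x * w x" for x
  have w0: "w0 \<in> weak.trial_space"
    unfolding w0_def[abs_def] by (rule restrict_L2_n0_trial_space[OF w])
  note uL = weak.trial_space_square_integrable[OF u] and w0L = weak.trial_space_square_integrable[OF w0]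
  have "AE x in lebesgue. x \<in> \<Omega>s \<longrightarrow> weak.nonlocal_op (\<lambda>x. w0 x - u x) x = 0"
    using strong_of_weak_solution[OF f w w_eq, folded w0_def[abs_def]] u_eq weak.nonlocal_op_diff[OF w0L uL]
    by eventually_elim simp
  then have "AE x in lebesgue. w0 x - u x = 0"
    by (rule weak.nonlocal_op_injective[OF weak.trial_space_diff[OF w0 u]])
  then show ?thesis
    unfolding AE_lebesgue_on_\<Omega> using L2_n0_zero_extension(2)[OF w]
  proof eventually_elim
    case (elim x)
    have "u x = 0" if "x \<in> \<Omega>c" using that disjoint_domains weak.trial_space_vanishes[OF u, of x] by blast
    then show ?case using elim by (auto simp: w0_def)
  qed
qed

lemma weak_solution_norm_bound:
  assumes f: "f \<in> L2 \<Omega>" and u: "u \<in> weak.trial_space"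
    and u_eq: "AE x in lebesgue. x \<in> \<Omega>s \<longrightarrow> weak.nonlocal_op u x = indicator \<Omega> x * f x"
  shows "L2_norm \<Omega> u \<le> 2 / K2 * L2_norm \<Omega> f"
proof -
  have f1: "(\<lambda>x. indicator \<Omega> x * f x) \<in> square_integrable lebesgue" using f by (simp add: L2_iff_zero_extension)
  have "K2\<^sup>2 * (\<integral>x. (u x)\<^sup>2 \<partial>lebesgue) \<le> (\<integral>x. (indicator \<Omega> x * f x)\<^sup>2 \<partial>lebesgue)"
    by (rule weak.nonlocal_problem_stability[OF u f1 u_eq])
  then have "sqrt (K2\<^sup>2 * (\<integral>x. (u x)\<^sup>2 \<partial>lebesgue)) \<le> L2_norm \<Omega> f"
    by (simp add: L2_norm_zero_extension real_sqrt_le_mono)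
  moreover have "indicator \<Omega> x * u x = u x" for x
    using fun_cong[OF trial_space_zero_extension[OF u], of x] by simp
  then have "L2_norm \<Omega> u = sqrt (\<integral>x. (u x)\<^sup>2 \<partial>lebesgue)"
    by (simp only: L2_norm_zero_extension[OF sets_\<Omega>])
  ultimately have "K2 * L2_norm \<Omega> u \<le> L2_norm \<Omega> f"
    using K2_pos by (simp add: real_sqrt_mult)
  moreover have "0 \<le> L2_norm \<Omega> f" by (simp add: L2_norm_def)
  ultimately show ?thesis using K2_pos by (simp add: field_simps)
qed

theorem weak_problem_well_posed:
  assumes f: "f \<in> L2 \<Omega>"
  shows "\<exists>u \<in> L2_n0 \<Omega> \<Omega>c.
           (\<forall>v \<in> L2_n0 \<Omega> \<Omega>c. bform \<gamma> \<Omega> u v = Ffun \<Omega> f v)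
         \<and> (\<forall>w \<in> L2_n0 \<Omega> \<Omega>c. (\<forall>v \<in> L2_n0 \<Omega> \<Omega>c. bform \<gamma> \<Omega> w v = Ffun \<Omega> f v)
               \<longrightarrow> (AE x in lebesgue_on \<Omega>. w x = u x))
         \<and> L2_norm \<Omega> u \<le> 2 / K2 * L2_norm \<Omega> f"
proof -
  have "(\<lambda>x. indicator \<Omega> x * f x) \<in> square_integrable lebesgue" using f by (simp add: L2_iff_zero_extension)
  then obtain u where u: "u \<in> weak.trial_space"
    and u_eq: "AE x in lebesgue. x \<in> \<Omega>s \<longrightarrow> weak.nonlocal_op u x = indicator \<Omega> x * f x"
    by (rule weak.nonlocal_problem_solvable)
  show ?thesis
    using trial_space_L2_n0[OF u] weak_solution_of_strong[OF f u u_eq]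
      weak_solution_unique[OF f u u_eq] weak_solution_norm_bound[OF f u u_eq]
    by blast
qed

end

theorem mainTheorem1:
  fixes \<Omega>s :: "(real^'n) set"
    and A :: "real^'n \<Rightarrow> real^'n^'n"
    and lam \<Lambda> \<delta> \<alpha> K1 K2 :: real
    and f :: "real^'n \<Rightarrow> real"
  defines "\<gamma>a \<equiv> gamma_trunc A \<delta> \<alpha>"
    and "\<Omega>c \<equiv> interaction_domain A \<delta> \<alpha> \<Omega>s"
    and "\<Omega> \<equiv> \<Omega>s \<union> interaction_domain A \<delta> \<alpha> \<Omega>s"
  assumes dom: "bounded \<Omega>s" "lipschitz_domain \<Omega>s"
    and sym: "\<And>x. transpose (A x) = A x"
    and lip: "\<And>i j. \<exists>C. C-lipschitz_on UNIV (\<lambda>x. A x $ i $ j)"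
    and ell_const: "0 < lam" "lam \<le> \<Lambda>"
    and ell: "\<And>x \<xi>. lam * (norm \<xi>)\<^sup>2 \<le> \<xi> \<bullet> (A x *v \<xi>) \<and> \<xi> \<bullet> (A x *v \<xi>) \<le> \<Lambda> * (norm \<xi>)\<^sup>2"
    and par: "0 < \<delta>" "0 < \<alpha>" "\<alpha> < 1"
    and K: "0 < K1" "0 < K2"
    and h1: "\<And>x. x \<in> \<Omega> \<Longrightarrow> (\<integral>y\<in>\<Omega>. \<gamma>a x y \<partial>lebesgue) \<le> 2 / \<delta>\<^sup>2"
    and h2: "\<And>x. x \<in> \<Omega> \<Longrightarrow> (\<integral>y\<in>\<Omega>. \<gamma>a y x \<partial>lebesgue) \<le> K1"
    and h3: "\<And>x. x \<in> \<Omega> \<Longrightarrow> (\<integral>y\<in>\<Omega>c. (\<gamma>a x y + \<gamma>a y x) / 2 \<partial>lebesgue) \<ge> K2"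
    and h4: "\<And>x. x \<in> \<Omega> \<Longrightarrow> (\<integral>y\<in>\<Omega>. (\<gamma>a x y - \<gamma>a y x) / 2 \<partial>lebesgue) \<ge> 0"
    and hf: "f \<in> L2 \<Omega>"
  shows "\<exists>u \<in> L2_n0 \<Omega> \<Omega>c.
           (\<forall>v \<in> L2_n0 \<Omega> \<Omega>c. bform \<gamma>a \<Omega> u v = Ffun \<Omega> f v)
         \<and> (\<forall>w \<in> L2_n0 \<Omega> \<Omega>c. (\<forall>v \<in> L2_n0 \<Omega> \<Omega>c. bform \<gamma>a \<Omega> w v = Ffun \<Omega> f v)
               \<longrightarrow> (AE x in lebesgue_on \<Omega>. w x = u x))
         \<and> L2_norm \<Omega> u \<le> 2 / K2 * L2_norm \<Omega> f"
proof -
  have continuous: "continuous_on UNIV (\<lambda>x. A x $ i $ j)" for i j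
    using lip[of i j] lipschitz_on_continuous_on by blast
  interpret truncated_kernel_problem A lam \<delta> \<alpha> K1 K2 \<Omega>s
    using ell ell_const(1) continuous par(1) K dom(1) dom(2)[unfolded lipschitz_domain_def]
      h1 h2 h3 h4 unfolding \<gamma>a_def \<Omega>c_def \<Omega>_def
    by unfold_locales auto
  show ?thesis
    using weak_problem_well_posed hf unfolding \<gamma>a_def \<Omega>c_def \<Omega>_def by blast
qed

end
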